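(* Assume $X$ is a semimartingale and that (1) $\mathbf 1_{\Gamma^-}*\nu^X\equiv0$, where $\Gamma^-:=\{(\omega,t,x): t<\tau,\ X_{t-}=b(t),\ x<0\}$; (2) $\mathbf 1_{\Gamma_+}*\nu^X\equiv0$, where $\Gamma_+:=\{(\omega,t,x): X_{t-}=b(t),\ x>0\}$; (3) $\mathbf 1_{\Gamma_0}*\nu^X\equiv0$, where $\Gamma_0:=\{(\omega,t,x): X_{t-}<b(t),\ x=b(t)-X_{t-}\}$. Then the no-premature-left-contact condition (for every finite $t\ge0$, $\sup_{0\le s\le t}Y_s<0$ on $\{\tau>t\}$) holds a.s., $\mathbb P(C_+)=0$, $\mathbb P(J_0)=0$, and $\{\tau<\infty\}=C_0\,\dot\cup\,J_+$ almost surely. If in addition $X$ has no jumps at predictable times (i.e. $\mathbb P(\Delta X_\sigma\neq0,\sigma<\infty)=0$ for every predictable stopping time $\sigma$), then $\tau_L$ is predictable and $\mathbb P(\{\tau=\sigma<\infty\}\cap J_+)=0$ for every predictable stopping time $\sigma$.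
   Context: Let $(\Omega,\mathcal F,\mathbb F=(\mathcal F_t)_{t\ge0},\mathbb P)$ be a filtered probability space satisfying the usual conditions. Let $X$ be a real-valued $\mathbb F$-semimartingale (càdlàg) and $b:[0,\infty)\to\mathbb R$ a continuous deterministic function, with $X_0<b(0)$ identically. $X_{t-}$ denotes the left limit and $\Delta X_t=X_t-X_{t-}$. Let $\mu^X$ be the jump measure of $X$ and $\nu^X$ its predictable compensator; $(W*\nu)_t:=\int_0^t\int_{\mathbb R}W(s,x)\,\nu(ds,dx)$ and "$\equiv0$" means identically zero up to evanescence. Set $Y_t:=X_t-b(t)$, $\tau:=\inf\{t\ge0:Y_t\ge0\}$ ($\inf\emptyset=\infty$), $L:=\{\tau<\infty,Y_{\tau-}=0\}$, $C_0:=\{\tau<\infty,Y_{\tau-}=0,Y_\tau=0\}$, $C_+:=\{\tau<\infty,Y_{\tau-}=0,Y_\tau>0\}$, $J_0:=\{\tau<\infty,Y_{\tau-}<0,Y_\tau=0\}$, $J_+:=\{\tau<\infty,Y_{\tau-}<0,Y_\tau>0\}$; $\tau_L:=\tau$ on $L$, $\tau_L:=\infty$ otherwise. *)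

theory Defs
  imports "HOL-Probability.Probability"
begin

definition usual_filtration :: "'a measure \<Rightarrow> (real \<Rightarrow> 'a measure) \<Rightarrow> bool" where
  "usual_filtration M F \<longleftrightarrow> prob_space M \<and> complete_measure M \<and>
     (\<forall>t\<ge>0. space (F t) = space M \<and> sets (F t) \<subseteq> sets M) \<and>
     (\<forall>s t. 0 \<le> s \<and> s \<le> t \<longrightarrow> sets (F s) \<subseteq> sets (F t)) \<and>
     null_sets M \<subseteq> sets (F 0) \<and>
     (\<forall>t\<ge>0. sets (F t) = (\<Inter>s\<in>{t<..}. sets (F s)))"

definition adapted :: "'a measure \<Rightarrow> (real \<Rightarrow> 'a measure) \<Rightarrow> (real \<Rightarrow> 'a \<Rightarrow> real) \<Rightarrow> bool" where
  "adapted M F X \<longleftrightarrow> (\<forall>t\<ge>0. X t \<in> borel_measurable (F t))"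

definition cadlag :: "(real \<Rightarrow> real) \<Rightarrow> bool" where
  "cadlag f \<longleftrightarrow> (\<forall>t\<ge>0. continuous (at_right t) f) \<and> (\<forall>t>0. \<exists>l. (f \<longlongrightarrow> l) (at_left t))"

definition cadlag_process :: "'a measure \<Rightarrow> (real \<Rightarrow> 'a \<Rightarrow> real) \<Rightarrow> bool" where
  "cadlag_process M X \<longleftrightarrow> (\<forall>\<omega>\<in>space M. cadlag (\<lambda>t. X t \<omega>))"

definition left_lim :: "(real \<Rightarrow> real) \<Rightarrow> real \<Rightarrow> real" where
  "left_lim f t = (if t \<le> 0 then f 0 else Lim (at_left t) f)"

definition jump :: "(real \<Rightarrow> real) \<Rightarrow> real \<Rightarrow> real" where
  "jump f t = f t - left_lim f t"

definition stopping_time_e :: "'a measure \<Rightarrow> (real \<Rightarrow> 'a measure) \<Rightarrow> ('a \<Rightarrow> ereal) \<Rightarrow> bool" where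
  "stopping_time_e M F T \<longleftrightarrow> (\<forall>\<omega>\<in>space M. 0 \<le> T \<omega>) \<and>
     (\<forall>t\<ge>0. {\<omega>\<in>space M. T \<omega> \<le> ereal t} \<in> sets (F t))"

definition predictable_sigma :: "'a measure \<Rightarrow> (real \<Rightarrow> 'a measure) \<Rightarrow> ('a \<times> real) measure" where
  "predictable_sigma M F = sigma (space M \<times> {0..})
     ({A \<times> {0} | A. A \<in> sets (F 0)} \<union>
      {A \<times> {s<..t} | A s t. 0 \<le> s \<and> s < t \<and> A \<in> sets (F s)})"

definition predictable_time :: "'a measure \<Rightarrow> (real \<Rightarrow> 'a measure) \<Rightarrow> ('a \<Rightarrow> ereal) \<Rightarrow> bool" where
  "predictable_time M F T \<longleftrightarrow> stopping_time_e M F T \<and>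
     {(\<omega>, t). \<omega> \<in> space M \<and> 0 \<le> t \<and> T \<omega> \<le> ereal t} \<in> sets (predictable_sigma M F)"

definition martingale :: "'a measure \<Rightarrow> (real \<Rightarrow> 'a measure) \<Rightarrow> (real \<Rightarrow> 'a \<Rightarrow> real) \<Rightarrow> bool" where
  "martingale M F X \<longleftrightarrow> adapted M F X \<and> (\<forall>t\<ge>0. integrable M (X t)) \<and>
     (\<forall>s t. 0 \<le> s \<and> s \<le> t \<longrightarrow> (AE \<omega> in M. real_cond_exp M (F s) (X t) \<omega> = X s \<omega>))"

definition stopped :: "(real \<Rightarrow> 'a \<Rightarrow> real) \<Rightarrow> ('a \<Rightarrow> ereal) \<Rightarrow> real \<Rightarrow> 'a \<Rightarrow> real" where
  "stopped X T = (\<lambda>t \<omega>. X (real_of_ereal (min (ereal t) (T \<omega>))) \<omega>)"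

definition local_martingale :: "'a measure \<Rightarrow> (real \<Rightarrow> 'a measure) \<Rightarrow> (real \<Rightarrow> 'a \<Rightarrow> real) \<Rightarrow> bool" where
  "local_martingale M F X \<longleftrightarrow> adapted M F X \<and> cadlag_process M X \<and>
     (\<exists>T :: nat \<Rightarrow> 'a \<Rightarrow> ereal. (\<forall>n. stopping_time_e M F (T n)) \<and>
        (\<forall>n. \<forall>\<omega>\<in>space M. T n \<omega> \<le> T (Suc n) \<omega>) \<and>
        (AE \<omega> in M. (\<lambda>n. T n \<omega>) \<longlonglongrightarrow> \<infinity>) \<and>
        (\<forall>n. martingale M F (stopped X (T n))))"

definition finite_variation_on :: "(real \<Rightarrow> real) \<Rightarrow> real \<Rightarrow> real \<Rightarrow> bool" where
  "finite_variation_on f a b \<longleftrightarrow> (\<exists>B. \<forall>(n::nat) (p::nat \<Rightarrow> real).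
      p 0 = a \<and> p n = b \<and> mono_on {..n} p \<longrightarrow> (\<Sum>i<n. \<bar>f (p (Suc i)) - f (p i)\<bar>) \<le> B)"

definition semimartingale :: "'a measure \<Rightarrow> (real \<Rightarrow> 'a measure) \<Rightarrow> (real \<Rightarrow> 'a \<Rightarrow> real) \<Rightarrow> bool" where
  "semimartingale M F X \<longleftrightarrow> adapted M F X \<and> cadlag_process M X \<and>
     (\<exists>L A. local_martingale M F L \<and> (\<forall>\<omega>\<in>space M. L 0 \<omega> = 0) \<and>
        adapted M F A \<and> cadlag_process M A \<and>
        (\<forall>\<omega>\<in>space M. A 0 \<omega> = 0 \<and> (\<forall>t\<ge>0. finite_variation_on (\<lambda>s. A s \<omega>) 0 t)) \<and>
        (AE \<omega> in M. \<forall>t\<ge>0. X t \<omega> = X 0 \<omega> + L t \<omega> + A t \<omega>))"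

text \<open>\<mu>^X(\<omega>; dt, dx) = sum over s > 0 with \<Delta>X_s \<noteq> 0 of the Dirac mass at (s, \<Delta>X_s).\<close>
definition jump_measure :: "(real \<Rightarrow> 'a \<Rightarrow> real) \<Rightarrow> 'a \<Rightarrow> (real \<times> real) measure" where
  "jump_measure X \<omega> = distr (count_space {s. 0 < s \<and> jump (\<lambda>t. X t \<omega>) s \<noteq> 0}) borel
      (\<lambda>s. (s, jump (\<lambda>t. X t \<omega>) s))"

text \<open>\<nu> is a predictable random measure (no mass on {t \<le> 0} or on {x = 0}, and W*\<nu> predictable
  for every nonnegative predictable function W) with E[W*\<mu>^X_\<infinity>] = E[W*\<nu>_\<infinity>] for all such W.\<close>
definition compensator :: "'a measure \<Rightarrow> (real \<Rightarrow> 'a measure) \<Rightarrow> (real \<Rightarrow> 'a \<Rightarrow> real)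
    \<Rightarrow> ('a \<Rightarrow> (real \<times> real) measure) \<Rightarrow> bool" where
  "compensator M F X \<nu> \<longleftrightarrow>
     (\<forall>\<omega>\<in>space M. sets (\<nu> \<omega>) = sets borel \<and>
        emeasure (\<nu> \<omega>) {p. fst p \<le> 0} = 0 \<and> emeasure (\<nu> \<omega>) {p. snd p = 0} = 0) \<and>
     (\<forall>W \<in> borel_measurable (predictable_sigma M F \<Otimes>\<^sub>M borel).
        (\<lambda>(\<omega>, t). \<integral>\<^sup>+ p. indicator {..t} (fst p) * W ((\<omega>, fst p), snd p) \<partial>\<nu> \<omega>)
          \<in> borel_measurable (predictable_sigma M F)) \<and>
     (\<forall>W \<in> borel_measurable (predictable_sigma M F \<Otimes>\<^sub>M borel).
        (\<integral>\<^sup>+ \<omega>. (\<integral>\<^sup>+ p. W ((\<omega>, fst p), snd p) \<partial>jump_measure X \<omega>) \<partial>M) =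
        (\<integral>\<^sup>+ \<omega>. (\<integral>\<^sup>+ p. W ((\<omega>, fst p), snd p) \<partial>\<nu> \<omega>) \<partial>M))"

definition ind_integral :: "('a \<Rightarrow> (real \<times> real) measure) \<Rightarrow> ('a \<Rightarrow> (real \<times> real) set) \<Rightarrow> real \<Rightarrow> 'a \<Rightarrow> ennreal" where
  "ind_integral \<nu> \<Gamma> t \<omega> = (\<integral>\<^sup>+ p. indicator {..t} (fst p) * indicator (\<Gamma> \<omega>) p \<partial>\<nu> \<omega>)"

definition Yp :: "(real \<Rightarrow> 'a \<Rightarrow> real) \<Rightarrow> (real \<Rightarrow> real) \<Rightarrow> real \<Rightarrow> 'a \<Rightarrow> real" where
  "Yp X b t \<omega> = X t \<omega> - b t"

definition hit_time :: "(real \<Rightarrow> 'a \<Rightarrow> real) \<Rightarrow> (real \<Rightarrow> real) \<Rightarrow> 'a \<Rightarrow> ereal" where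
  "hit_time X b \<omega> = Inf {ereal t | t. 0 \<le> t \<and> 0 \<le> Yp X b t \<omega>}"

text \<open>Y_{\<tau>-} and Y_\<tau> (meaningful on {\<tau> < \<infinity>}).\<close>
definition Y_tau_minus :: "(real \<Rightarrow> 'a \<Rightarrow> real) \<Rightarrow> (real \<Rightarrow> real) \<Rightarrow> 'a \<Rightarrow> real" where
  "Y_tau_minus X b \<omega> = left_lim (\<lambda>t. Yp X b t \<omega>) (real_of_ereal (hit_time X b \<omega>))"

definition Y_tau :: "(real \<Rightarrow> 'a \<Rightarrow> real) \<Rightarrow> (real \<Rightarrow> real) \<Rightarrow> 'a \<Rightarrow> real" where
  "Y_tau X b \<omega> = Yp X b (real_of_ereal (hit_time X b \<omega>)) \<omega>"

definition L_set :: "'a measure \<Rightarrow> (real \<Rightarrow> 'a \<Rightarrow> real) \<Rightarrow> (real \<Rightarrow> real) \<Rightarrow> 'a set" where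
  "L_set M X b = {\<omega>\<in>space M. hit_time X b \<omega> < \<infinity> \<and> Y_tau_minus X b \<omega> = 0}"

definition C_zero :: "'a measure \<Rightarrow> (real \<Rightarrow> 'a \<Rightarrow> real) \<Rightarrow> (real \<Rightarrow> real) \<Rightarrow> 'a set" where
  "C_zero M X b = {\<omega>\<in>space M. hit_time X b \<omega> < \<infinity> \<and> Y_tau_minus X b \<omega> = 0 \<and> Y_tau X b \<omega> = 0}"

definition C_plus :: "'a measure \<Rightarrow> (real \<Rightarrow> 'a \<Rightarrow> real) \<Rightarrow> (real \<Rightarrow> real) \<Rightarrow> 'a set" where
  "C_plus M X b = {\<omega>\<in>space M. hit_time X b \<omega> < \<infinity> \<and> Y_tau_minus X b \<omega> = 0 \<and> Y_tau X b \<omega> > 0}"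

definition J_zero :: "'a measure \<Rightarrow> (real \<Rightarrow> 'a \<Rightarrow> real) \<Rightarrow> (real \<Rightarrow> real) \<Rightarrow> 'a set" where
  "J_zero M X b = {\<omega>\<in>space M. hit_time X b \<omega> < \<infinity> \<and> Y_tau_minus X b \<omega> < 0 \<and> Y_tau X b \<omega> = 0}"

definition J_plus :: "'a measure \<Rightarrow> (real \<Rightarrow> 'a \<Rightarrow> real) \<Rightarrow> (real \<Rightarrow> real) \<Rightarrow> 'a set" where
  "J_plus M X b = {\<omega>\<in>space M. hit_time X b \<omega> < \<infinity> \<and> Y_tau_minus X b \<omega> < 0 \<and> Y_tau X b \<omega> > 0}"

definition tau_L :: "'a measure \<Rightarrow> (real \<Rightarrow> 'a \<Rightarrow> real) \<Rightarrow> (real \<Rightarrow> real) \<Rightarrow> 'a \<Rightarrow> ereal" where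
  "tau_L M X b \<omega> = (if \<omega> \<in> L_set M X b then hit_time X b \<omega> else \<infinity>)"

definition Gamma_minus :: "(real \<Rightarrow> 'a \<Rightarrow> real) \<Rightarrow> (real \<Rightarrow> real) \<Rightarrow> 'a \<Rightarrow> (real \<times> real) set" where
  "Gamma_minus X b \<omega> = {(t, x). ereal t < hit_time X b \<omega> \<and> left_lim (\<lambda>s. X s \<omega>) t = b t \<and> x < 0}"

definition Gamma_plus :: "(real \<Rightarrow> 'a \<Rightarrow> real) \<Rightarrow> (real \<Rightarrow> real) \<Rightarrow> 'a \<Rightarrow> (real \<times> real) set" where
  "Gamma_plus X b \<omega> = {(t, x). left_lim (\<lambda>s. X s \<omega>) t = b t \<and> 0 < x}"

definition Gamma_zero :: "(real \<Rightarrow> 'a \<Rightarrow> real) \<Rightarrow> (real \<Rightarrow> real) \<Rightarrow> 'a \<Rightarrow> (real \<times> real) set" where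
  "Gamma_zero X b \<omega> = {(t, x). left_lim (\<lambda>s. X s \<omega>) t < b t \<and> x = b t - left_lim (\<lambda>s. X s \<omega>) t}"

end

theory Submission
  imports Defs
begin

(* Write Y = X - b. For the levels -1/(n+1) let \<tau>\<^sub>n be the first time Y exceeds the level; the
   \<tau>\<^sub>n increase to a limit \<tau>' \<le> \<tau>. If they stay strictly below their finite limit, Y creeps up
   to the barrier: Y(\<tau>'-) = 0, so X(\<tau>'-) = b(\<tau>') and the jump of X at \<tau>' is Y(\<tau>'). This creeping
   time is announced by the \<tau>\<^sub>n, hence predictable, and predictable integrands carried by its graph
   can be compensated.
   A premature left contact, \<tau>' < \<tau>, is a negative jump of this kind strictly before \<tau>, which (1)
   excludes a.s.; afterwards \<tau> = \<tau>' a.s. A positive jump at a creeping time is excluded by (2), so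
   C\<^sub>+ is null. If instead some \<tau>\<^sub>n equals the limit, Y jumps at \<tau> from strictly below, and (3)
   excludes landing exactly on the barrier, so J\<^sub>0 is null. Finally \<tau>\<^sub>L agrees a.s. with the
   creeping time, and under the usual conditions this preserves predictability. *)

definition first_time :: "real set \<Rightarrow> ereal" where
  "first_time A = Inf (ereal ` A)"

lemma first_time_empty [simp]: "first_time {} = \<infinity>"
  by (simp add: first_time_def top_ereal_def)

lemma first_time_eq_Inf:
  assumes "A \<noteq> {}" "A \<subseteq> {0..}"
  shows "first_time A = ereal (Inf A)"
proof -
  have "bdd_below A" using assms(2) by (auto simp: bdd_below_def)
  thus ?thesis unfolding first_time_def using ereal_Inf'[OF _ assms(1)] by simp
qed

lemma first_time_finite_iff: "A \<subseteq> {0..} \<Longrightarrow> first_time A < \<infinity> \<longleftrightarrow> A \<noteq> {}"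
  by (cases "A = {}") (auto simp: first_time_eq_Inf)

lemma first_time_le: "a \<in> A \<Longrightarrow> first_time A \<le> ereal a"
  unfolding first_time_def by (auto intro: Inf_lower)

lemma first_time_less_iff: "first_time A < ereal u \<longleftrightarrow> (\<exists>a\<in>A. a < u)"
  unfolding first_time_def by (auto simp: Inf_less_iff)

lemma first_time_greatest: "(\<And>a. a \<in> A \<Longrightarrow> c \<le> ereal a) \<Longrightarrow> c \<le> first_time A"
  unfolding first_time_def by (auto intro: Inf_greatest)

lemma first_time_antimono: "A \<subseteq> B \<Longrightarrow> first_time B \<le> first_time A"
  unfolding first_time_def by (auto intro: Inf_superset_mono)

lemma right_continuous_ge_at_Inf:
  fixes y :: "real \<Rightarrow> real"
  assumes rc: "\<forall>t\<ge>0. continuous (at_right t) y"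
    and A: "A \<noteq> {}" "A \<subseteq> {0..}" and ge: "\<And>a. a \<in> A \<Longrightarrow> c \<le> y a"
  shows "c \<le> y (Inf A)"
proof (rule ccontr)
  assume "\<not> c \<le> y (Inf A)"
  hence lt: "y (Inf A) < c" by simp
  have bdd: "bdd_below A" using A(2) by (auto simp: bdd_below_def)
  have "0 \<le> Inf A" using A by (intro cInf_greatest) auto
  hence "(y \<longlongrightarrow> y (Inf A)) (at_right (Inf A))" using rc by (simp add: continuous_within)
  hence "eventually (\<lambda>t. y t < c) (at_right (Inf A))" using lt by (rule order_tendstoD)
  then obtain d where d: "d > Inf A" "\<And>t. Inf A < t \<Longrightarrow> t < d \<Longrightarrow> y t < c"
    by (auto simp: eventually_at_right_field)
  obtain a where a: "a \<in> A" "a < d" using d(1) cInf_less_iff[OF A(1) bdd] by blast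
  have "Inf A \<le> a" using bdd a(1) by (simp add: cInf_lower)
  moreover have "a \<noteq> Inf A" using lt ge[OF a(1)] by auto
  ultimately show False using d(2)[of a] a ge[OF a(1)] by fastforce
qed

definition level :: "nat \<Rightarrow> real" where
  "level n = - 1 / (real n + 1)"

lemma level_neg: "level n < 0"
  by (simp add: level_def)

lemma level_mono: "n \<le> m \<Longrightarrow> level n \<le> level m"
  by (simp add: level_def frac_le)

lemma level_tendsto_zero: "level \<longlonglongrightarrow> 0"
proof -
  have "(\<lambda>n. 1 / (real n + 1)) \<longlonglongrightarrow> 0"
    using LIMSEQ_Suc[OF lim_inverse_n'] by (simp add: add.commute)
  from tendsto_minus[OF this] show ?thesis by (simp add: level_def[abs_def])
qed

lemma exists_level_above: "c < 0 \<Longrightarrow> \<exists>n. c < level n"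
  using order_tendstoD(1)[OF level_tendsto_zero] by (auto simp: eventually_sequentially)

definition hit :: "(real \<Rightarrow> real) \<Rightarrow> ereal" where
  "hit y = first_time {t. 0 \<le> t \<and> 0 \<le> y t}"

definition approach_time :: "(real \<Rightarrow> real) \<Rightarrow> nat \<Rightarrow> ereal" where
  "approach_time y n = first_time {t. 0 \<le> t \<and> level n < y t}"

text \<open>The approach times increase to \<open>approach_limit y \<le> hit y\<close>. If they stay strictly below their
  finite limit, \<open>y\<close> creeps up to \<open>0\<close>; the inequality is strict exactly when \<open>y\<close> then jumps back
  below \<open>0\<close> instead of reaching it: a premature left contact.\<close>
definition approach_limit :: "(real \<Rightarrow> real) \<Rightarrow> ereal" where
  "approach_limit y = (SUP n. approach_time y n)"

definition creeping :: "(real \<Rightarrow> real) \<Rightarrow> bool" where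
  "creeping y \<longleftrightarrow> approach_limit y < \<infinity> \<and> (\<forall>n. approach_time y n < approach_limit y)"

lemma approach_time_mono: "n \<le> m \<Longrightarrow> approach_time y n \<le> approach_time y m"
  unfolding approach_time_def by (rule first_time_antimono) (auto dest: level_mono[of n m])

lemma approach_time_le_hit: "approach_time y n \<le> hit y"
  unfolding approach_time_def hit_def
  by (rule first_time_antimono) (auto intro: less_le_trans[OF level_neg])

lemma approach_time_le_limit: "approach_time y n \<le> approach_limit y"
  unfolding approach_limit_def by (rule SUP_upper) simp

lemma approach_limit_le_hit: "approach_limit y \<le> hit y"
  unfolding approach_limit_def by (rule SUP_least) (rule approach_time_le_hit)

lemma approach_time_nonneg: "0 \<le> approach_time y n"
  unfolding approach_time_def by (rule first_time_greatest) auto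

lemma approach_limit_nonneg: "0 \<le> approach_limit y"
  using approach_time_nonneg approach_time_le_limit by (rule order.trans)

lemma hit_nonneg: "0 \<le> hit y"
  unfolding hit_def by (rule first_time_greatest) auto

lemma neg_before_hit: "0 \<le> s \<Longrightarrow> ereal s < hit y \<Longrightarrow> y s < 0"
  unfolding hit_def using first_time_le[of s "{t. 0 \<le> t \<and> 0 \<le> y t}"] by force

lemma below_level_before_approach_time:
  "0 \<le> s \<Longrightarrow> ereal s < approach_time y n \<Longrightarrow> y s \<le> level n"
  unfolding approach_time_def using first_time_le[of s "{t. 0 \<le> t \<and> level n < y t}"] by force

lemma Sup_neg_before_approach_limit:
  assumes "0 \<le> t" "ereal t < approach_limit y"
  shows "(SUP s\<in>{0..t}. y s) < 0"
proof -
  obtain n where n: "ereal t < approach_time y n"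
    using assms(2) by (auto simp: approach_limit_def less_SUP_iff)
  have "(SUP s\<in>{0..t}. y s) \<le> level n"
  proof (rule cSUP_least)
    show "{0..t} \<noteq> {}" using assms(1) by simp
    fix s assume s: "s \<in> {0..t}"
    hence "ereal s \<le> ereal t" by simp
    hence "ereal s < approach_time y n" using n by (rule order.strict_trans1)
    thus "y s \<le> level n" using below_level_before_approach_time[of s y n] s by simp
  qed
  thus ?thesis using level_neg[of n] by linarith
qed

lemma cadlag_tendsto_left_lim:
  assumes "cadlag y" "0 < t"
  shows "(y \<longlongrightarrow> left_lim y t) (at_left t)"
proof -
  obtain l where "(y \<longlongrightarrow> l) (at_left t)" using assms by (auto simp: cadlag_def)
  thus ?thesis using assms(2) by (simp add: left_lim_def tendsto_Lim)
qed

locale cadlag_below_zero =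
  fixes y :: "real \<Rightarrow> real"
  assumes cadlag: "cadlag y" and starts_below: "y 0 < 0"
begin

lemma right_continuous: "\<forall>t\<ge>0. continuous (at_right t) y"
  using cadlag by (simp add: cadlag_def)

lemma left_lim_le_if_eventually:
  assumes "0 < r" "\<And>s. 0 < s \<Longrightarrow> s < r \<Longrightarrow> y s \<le> c"
  shows "left_lim y r \<le> c"
proof -
  have "eventually (\<lambda>s. y s \<le> c) (at_left r)"
    unfolding eventually_at_left_field using assms by blast
  thus ?thesis using cadlag_tendsto_left_lim[OF cadlag assms(1)] by (intro tendsto_upperbound) auto
qed

lemma hit_finite:
  assumes "hit y < \<infinity>"
  obtains r where "hit y = ereal r" "0 < r" "0 \<le> y r"
proof -
  let ?A = "{t. 0 \<le> t \<and> 0 \<le> y t}"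
  have A: "?A \<noteq> {}" "?A \<subseteq> {0..}" using assms first_time_finite_iff[of ?A] by (auto simp: hit_def)
  have "0 \<le> y (Inf ?A)" by (rule right_continuous_ge_at_Inf[OF right_continuous A]) auto
  moreover have "0 \<le> Inf ?A" using A by (intro cInf_greatest) auto
  ultimately have "0 < Inf ?A" using starts_below by (cases "Inf ?A = 0") auto
  moreover have "hit y = ereal (Inf ?A)" unfolding hit_def by (rule first_time_eq_Inf[OF A])
  ultimately show ?thesis using \<open>0 \<le> y (Inf ?A)\<close> that by blast
qed

lemma approach_time_finite:
  assumes "approach_time y n < \<infinity>"
  obtains r where "approach_time y n = ereal r" "level n \<le> y r"
proof -
  let ?A = "{t. 0 \<le> t \<and> level n < y t}"
  have A: "?A \<noteq> {}" "?A \<subseteq> {0..}"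
    using assms first_time_finite_iff[of ?A] by (auto simp: approach_time_def)
  have "level n \<le> y (Inf ?A)" by (rule right_continuous_ge_at_Inf[OF right_continuous A]) auto
  moreover have "approach_time y n = ereal (Inf ?A)"
    unfolding approach_time_def by (rule first_time_eq_Inf[OF A])
  ultimately show ?thesis using that by blast
qed

lemma approach_limit_pos: "0 < approach_limit y"
proof -
  obtain n where n: "y 0 < level n" using exists_level_above[OF starts_below] by auto
  have "0 < approach_time y n"
  proof (cases "approach_time y n < \<infinity>")
    case True
    then obtain r where "approach_time y n = ereal r" "level n \<le> y r" by (rule approach_time_finite)
    thus ?thesis using n approach_time_nonneg[of y n] by (cases "r = 0") auto
  qed auto
  thus ?thesis using approach_time_le_limit[of y n] by auto
qed

lemma left_lim_hit_nonpos:
  assumes "hit y = ereal r" "0 < r"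
  shows "left_lim y r \<le> 0"
proof (rule left_lim_le_if_eventually[OF assms(2)])
  fix s assume "0 < s" "s < r"
  thus "y s \<le> 0" using neg_before_hit[of s y] assms(1) by simp
qed

lemma approach_time_attains_limit:
  assumes fin: "approach_limit y = ereal r" and n: "approach_time y n = approach_limit y"
  shows "hit y = approach_limit y" "left_lim y r < 0" "0 < r"
proof -
  show r0: "0 < r" using approach_limit_pos fin by auto
  have "\<forall>m\<ge>n. level m \<le> y r"
  proof (intro allI impI)
    fix m assume "n \<le> m"
    have eq: "approach_time y m = ereal r"
      using approach_time_mono[OF \<open>n \<le> m\<close>, of y] approach_time_le_limit[of y m] n fin by auto
    hence "approach_time y m < \<infinity>" by simp
    then obtain r' where "approach_time y m = ereal r'" "level m \<le> y r'"
      by (rule approach_time_finite)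
    thus "level m \<le> y r" using eq by auto
  qed
  hence "0 \<le> y r"
  proof (rule contrapos_pp)
    assume "\<not> 0 \<le> y r"
    then obtain m where "y r < level m" using exists_level_above by force
    hence "y r < level (max m n)" using level_mono[of m "max m n"] by linarith
    thus "\<not> (\<forall>m\<ge>n. level m \<le> y r)" by (meson max.cobounded2 not_le)
  qed
  hence "hit y \<le> ereal r" unfolding hit_def using r0 by (intro first_time_le) auto
  thus "hit y = approach_limit y" using approach_limit_le_hit[of y] fin by auto
  have "left_lim y r \<le> level n"
  proof (rule left_lim_le_if_eventually[OF r0])
    fix s assume "0 < s" "s < r"
    thus "y s \<le> level n" using fin n below_level_before_approach_time[of s y n] by simp
  qed
  thus "left_lim y r < 0" using level_neg[of n] by auto
qed

lemma creeping_left_lim: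
  assumes fin: "approach_limit y = ereal r" and strict: "\<forall>n. approach_time y n < approach_limit y"
  shows "left_lim y r = 0" "0 < r"
proof -
  show r0: "0 < r" using approach_limit_pos fin by auto
  have "\<exists>h. approach_time y n = ereal h \<and> level n \<le> y h" for n
    using strict fin by (metis approach_time_finite ereal_less_PInfty order.strict_trans)
  then obtain h where h: "\<And>n. approach_time y n = ereal (h n)" "\<And>n. level n \<le> y (h n)"
    by metis
  have "(\<lambda>n. approach_time y n) \<longlonglongrightarrow> approach_limit y" unfolding approach_limit_def
    by (rule LIMSEQ_SUP) (auto simp: incseq_def intro: approach_time_mono)
  hence "h \<longlonglongrightarrow> r" using h(1) fin by (simp add: lim_ereal)
  moreover have "h n < r" for n using strict[rule_format, of n] h(1)[of n] fin by simp
  ultimately have "filterlim h (at_left r) sequentially"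
    by (auto simp: filterlim_at intro!: always_eventually)
  hence "(\<lambda>n. y (h n)) \<longlonglongrightarrow> left_lim y r"
    using cadlag_tendsto_left_lim[OF cadlag r0] by (rule filterlim_compose[rotated])
  hence "0 \<le> left_lim y r"
    using h(2) by (intro tendsto_le[OF trivial_limit_sequentially _ level_tendsto_zero]) auto
  moreover have "left_lim y r \<le> 0"
  proof (rule left_lim_le_if_eventually[OF r0])
    fix s assume "0 < s" "s < r"
    hence "ereal s < ereal r" by simp
    hence "ereal s < hit y" using fin approach_limit_le_hit[of y] by (metis order.strict_trans2)
    thus "y s \<le> 0" using neg_before_hit[of s y] \<open>0 < s\<close> by simp
  qed
  ultimately show "left_lim y r = 0" by auto
qed

lemma approach_time_less_hit:
  assumes "hit y = ereal r" "0 < r" "left_lim y r = 0"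
  shows "approach_time y n < hit y"
proof -
  have "eventually (\<lambda>s. level n < y s) (at_left r)"
    using cadlag_tendsto_left_lim[OF cadlag assms(2)] assms(3) level_neg[of n] by (auto intro: order_tendstoD)
  then obtain a where a: "a < r" "\<And>s. a < s \<Longrightarrow> s < r \<Longrightarrow> level n < y s"
    by (auto simp: eventually_at_left_field)
  define s where "s = (max a 0 + r) / 2"
  have s: "0 \<le> s" "a < s" "s < r" using a assms(2) by (auto simp: s_def)
  hence "approach_time y n \<le> ereal s" unfolding approach_time_def using a(2) by (intro first_time_le) simp
  also have "\<dots> < hit y" using s(3) assms(1) by simp
  finally show ?thesis .
qed

lemma creeping_iff_left_lim_hit:
  assumes eq: "approach_limit y = hit y" and r: "hit y = ereal r"
  shows "creeping y \<longleftrightarrow> left_lim y r = 0"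
proof
  assume "creeping y"
  thus "left_lim y r = 0" using creeping_left_lim(1)[of r] eq r by (simp add: creeping_def)
next
  assume "left_lim y r = 0"
  moreover have "0 < r" using approach_limit_pos eq r by simp
  ultimately show "creeping y"
    using approach_time_less_hit[OF r] eq r by (simp add: creeping_def)
qed

lemma premature_left_contact:
  assumes lt: "approach_limit y < hit y"
  shows "creeping y \<and> y (real_of_ereal (approach_limit y)) < 0"
proof -
  obtain r where fin: "approach_limit y = ereal r"
    using lt approach_limit_nonneg[of y] by (cases "approach_limit y") auto
  have strict: "\<forall>n. approach_time y n < approach_limit y"
  proof
    fix n
    show "approach_time y n < approach_limit y"
      using approach_time_attains_limit(1)[OF fin, of n] approach_time_le_limit[of y n] lt
      by (auto simp: order.order_iff_strict)
  qed
  have "y r < 0" using neg_before_hit[of r y] lt fin creeping_left_lim(2)[OF fin strict] by simp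
  thus ?thesis using fin strict by (simp add: creeping_def)
qed

end

lemma ereal_le_iff_rational_approx:
  fixes T :: ereal
  shows "T \<le> ereal t \<longleftrightarrow> (\<forall>m::nat. \<exists>q\<in>\<rat>. T \<le> ereal q \<and> q - 1 / (real m + 1) < t)"
proof
  assume le: "T \<le> ereal t"
  show "\<forall>m::nat. \<exists>q\<in>\<rat>. T \<le> ereal q \<and> q - 1 / (real m + 1) < t"
  proof
    fix m :: nat
    obtain q where q: "q \<in> \<rat>" "t < q" "q < t + 1 / (real m + 1)"
      using Rats_dense_in_real[of t "t + 1 / (real m + 1)"] by auto
    have "T \<le> ereal q" using le q(2) by (metis ereal_less_eq(3) less_imp_le order.trans)
    thus "\<exists>q\<in>\<rat>. T \<le> ereal q \<and> q - 1 / (real m + 1) < t" using q by auto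
  qed
next
  assume H: "\<forall>m::nat. \<exists>q\<in>\<rat>. T \<le> ereal q \<and> q - 1 / (real m + 1) < t"
  show "T \<le> ereal t"
  proof (rule ccontr)
    assume "\<not> T \<le> ereal t"
    moreover obtain q where "T \<le> ereal q" using H by blast
    ultimately obtain a where a: "T = ereal a" "t < a" by (cases T) auto
    then obtain m :: nat where m: "1 / (real m + 1) < a - t"
      using reals_Archimedean[of "a - t"] by (auto simp: inverse_eq_divide add.commute)
    obtain q where "T \<le> ereal q" "q - 1 / (real m + 1) < t" using H by blast
    thus False using a m by simp
  qed
qed

locale usual_filtered_space =
  fixes M :: "'a measure" and F :: "real \<Rightarrow> 'a measure"
  assumes usual: "usual_filtration M F"
begin

abbreviation P :: "('a \<times> real) measure" where
  "P \<equiv> predictable_sigma M F"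

lemma complete_M: "complete_measure M"
  using usual unfolding usual_filtration_def by (elim conjE) assumption

lemma filtration_in_M: "\<forall>t\<ge>0. space (F t) = space M \<and> sets (F t) \<subseteq> sets M"
  using usual unfolding usual_filtration_def by (elim conjE) assumption

lemma filtration_mono: "\<forall>s t. 0 \<le> s \<and> s \<le> t \<longrightarrow> sets (F s) \<subseteq> sets (F t)"
  using usual unfolding usual_filtration_def by (elim conjE) assumption

lemma null_sets_F0: "null_sets M \<subseteq> sets (F 0)"
  using usual unfolding usual_filtration_def by (elim conjE) assumption

lemma filtration_right_continuous: "\<forall>t\<ge>0. sets (F t) = (\<Inter>s\<in>{t<..}. sets (F s))"
  using usual unfolding usual_filtration_def by (elim conjE) assumption

sublocale complete_measure M
  by (rule complete_M)

lemma space_F: "0 \<le> t \<Longrightarrow> space (F t) = space M"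
  using filtration_in_M by simp

lemma sets_F_subset: "0 \<le> t \<Longrightarrow> sets (F t) \<subseteq> sets M"
  using filtration_in_M by simp

lemma sets_F_mono: "0 \<le> s \<Longrightarrow> s \<le> t \<Longrightarrow> sets (F s) \<subseteq> sets (F t)"
  using filtration_mono by simp

lemma space_in_F0: "space M \<in> sets (F 0)"
  using sets.top[of "F 0"] space_F[of 0] by simp

lemma sets_F_right_continuous:
  assumes "0 \<le> t" "\<And>s. t < s \<Longrightarrow> A \<in> sets (F s)"
  shows "A \<in> sets (F t)"
proof -
  have "sets (F t) = (\<Inter>s\<in>{t<..}. sets (F s))"
    using filtration_right_continuous assms(1) by (elim allE[of _ t] impE)
  thus ?thesis using assms(2) by simp
qed

lemma stopping_time_nonneg: "stopping_time_e M F T \<Longrightarrow> \<omega> \<in> space M \<Longrightarrow> 0 \<le> T \<omega>"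
  by (simp add: stopping_time_e_def)

lemma stopping_time_measurable:
  assumes T: "stopping_time_e M F T"
  shows "T \<in> borel_measurable M"
proof (rule borel_measurableI_le)
  fix c :: ereal
  show "{\<omega> \<in> space M. T \<omega> \<le> c} \<in> sets M"
  proof (cases "c < 0")
    case True
    have "{\<omega> \<in> space M. T \<omega> \<le> c} = {}"
    proof safe
      fix \<omega> assume "\<omega> \<in> space M" "T \<omega> \<le> c"
      thus "\<omega> \<in> {}" using stopping_time_nonneg[OF T] True by (meson leD order.trans)
    qed
    thus ?thesis by (simp only: sets.empty_sets)
  next
    case False
    show ?thesis
    proof (cases c)
      case (real r)
      hence "{\<omega> \<in> space M. T \<omega> \<le> c} \<in> sets (F r)" using T False by (simp add: stopping_time_e_def)
      thus ?thesis using sets_F_subset[of r] False real by auto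
    qed (use False in simp_all)
  qed
qed

lemma stopping_time_const:
  assumes "0 \<le> c"
  shows "stopping_time_e M F (\<lambda>_. ereal c)"
  unfolding stopping_time_e_def
proof (intro conjI ballI allI impI)
  fix t :: real assume t: "0 \<le> t"
  show "{\<omega>\<in>space M. ereal c \<le> ereal t} \<in> sets (F t)"
  proof (cases "c \<le> t")
    case True
    hence "{\<omega>\<in>space M. ereal c \<le> ereal t} = space (F t)" using space_F[OF t] by simp
    thus ?thesis by (simp only: sets.top)
  qed simp
qed (use assms in simp)

lemma stopping_time_less_le_in_F:
  assumes S: "stopping_time_e M F S" and T: "stopping_time_e M F T" and t: "0 \<le> t"
  shows "{\<omega>\<in>space M. S \<omega> < T \<omega> \<and> T \<omega> \<le> ereal t} \<in> sets (F t)"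
proof -
  let ?between = "\<lambda>q. {\<omega>\<in>space M. S \<omega> \<le> ereal q} \<inter> (space M - {\<omega>\<in>space M. T \<omega> \<le> ereal q})"
  have "{\<omega>\<in>space M. S \<omega> < T \<omega> \<and> T \<omega> \<le> ereal t} =
      (\<Union>q\<in>\<rat>\<inter>{0..t}. ?between q) \<inter> {\<omega>\<in>space M. T \<omega> \<le> ereal t}"
  proof (intro set_eqI iffI)
    fix \<omega> assume "\<omega> \<in> {\<omega>\<in>space M. S \<omega> < T \<omega> \<and> T \<omega> \<le> ereal t}"
    hence \<omega>: "\<omega> \<in> space M" and lt: "S \<omega> < T \<omega>" and le: "T \<omega> \<le> ereal t" by auto
    obtain h where h: "T \<omega> = ereal h" using le stopping_time_nonneg[OF T \<omega>] by (cases "T \<omega>") auto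
    obtain a where a: "S \<omega> = ereal a" "0 \<le> a"
      using lt h stopping_time_nonneg[OF S \<omega>] by (cases "S \<omega>") auto
    have "a < h" using lt a h by simp
    then obtain q where "q \<in> \<rat>" "a < q" "q < h" using Rats_dense_in_real by blast
    thus "\<omega> \<in> (\<Union>q\<in>\<rat>\<inter>{0..t}. ?between q) \<inter> {\<omega>\<in>space M. T \<omega> \<le> ereal t}"
      using a h \<omega> le by (intro IntI UN_I[of q]) auto
  next
    fix \<omega> assume "\<omega> \<in> (\<Union>q\<in>\<rat>\<inter>{0..t}. ?between q) \<inter> {\<omega>\<in>space M. T \<omega> \<le> ereal t}"
    then obtain q where \<omega>: "\<omega> \<in> space M" and q: "S \<omega> \<le> ereal q" "\<not> T \<omega> \<le> ereal q"
      and le: "T \<omega> \<le> ereal t" by auto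
    have "S \<omega> < T \<omega>" using q by (simp add: not_le le_less_trans)
    thus "\<omega> \<in> {\<omega>\<in>space M. S \<omega> < T \<omega> \<and> T \<omega> \<le> ereal t}" using \<omega> le by simp
  qed
  also have "\<dots> \<in> sets (F t)"
  proof (rule sets.Int)
    show "(\<Union>q\<in>\<rat>\<inter>{0..t}. ?between q) \<in> sets (F t)"
    proof (rule sets.countable_UN'')
      show "countable (\<rat>\<inter>{0..t})" using countable_rat by (rule countable_subset[rotated]) auto
      fix q assume "q \<in> \<rat>\<inter>{0..t}"
      hence q: "0 \<le> q" "q \<le> t" by auto
      have "{\<omega>\<in>space M. S \<omega> \<le> ereal q} \<in> sets (F t)"
        using S q sets_F_mono[OF q] by (auto simp: stopping_time_e_def)
      moreover have "{\<omega>\<in>space M. T \<omega> \<le> ereal q} \<in> sets (F t)"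
        using T q sets_F_mono[OF q] by (auto simp: stopping_time_e_def)
      hence "space M - {\<omega>\<in>space M. T \<omega> \<le> ereal q} \<in> sets (F t)"
        using sets.compl_sets[of _ "F t"] space_F[OF t] by simp
      ultimately show "?between q \<in> sets (F t)" by (rule sets.Int)
    qed
    show "{\<omega>\<in>space M. T \<omega> \<le> ereal t} \<in> sets (F t)" using T t by (simp add: stopping_time_e_def)
  qed
  finally show ?thesis .
qed

definition predictable_gens :: "('a \<times> real) set set" where
  "predictable_gens = {A \<times> {0} | A. A \<in> sets (F 0)} \<union>
     {A \<times> {s<..t} | A s t. 0 \<le> s \<and> s < t \<and> A \<in> sets (F s)}"

lemma predictable_gens_Pow: "predictable_gens \<subseteq> Pow (space M \<times> {0..})"
proof
  fix G assume "G \<in> predictable_gens"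
  then consider A where "G = A \<times> {0}" "A \<in> sets (F 0)"
    | A s t where "G = A \<times> {s<..t}" "0 \<le> s" "A \<in> sets (F s)"
    unfolding predictable_gens_def by blast
  thus "G \<in> Pow (space M \<times> {0..})"
  proof cases
    case 1
    thus ?thesis using sets.sets_into_space[OF 1(2)] space_F[of 0] by auto
  next
    case 2
    thus ?thesis using sets.sets_into_space[OF 2(3)] space_F[OF 2(2)] by auto
  qed
qed

lemma predictable_sigma_eq: "P = sigma (space M \<times> {0..}) predictable_gens"
  unfolding predictable_sigma_def predictable_gens_def by simp

lemma space_P: "space P = space M \<times> {0..}"
  unfolding predictable_sigma_eq by (simp add: space_measure_of_conv)

lemma sets_P: "sets P = sigma_sets (space M \<times> {0..}) predictable_gens"
  unfolding predictable_sigma_eq using predictable_gens_Pow by (simp add: sets_measure_of)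

lemma predictable_rectangle_0: "A \<in> sets (F 0) \<Longrightarrow> A \<times> {0} \<in> sets P"
  unfolding sets_P predictable_gens_def by (rule sigma_sets.Basic) blast

lemma predictable_rectangle:
  "A \<in> sets (F s) \<Longrightarrow> 0 \<le> s \<Longrightarrow> s < t \<Longrightarrow> A \<times> {s<..t} \<in> sets P"
  unfolding sets_P predictable_gens_def by (rule sigma_sets.Basic) blast

lemma predictable_rectangle_unbounded:
  assumes "A \<in> sets (F s)" "0 \<le> s"
  shows "A \<times> {s<..} \<in> sets P"
proof -
  have "A \<times> {s<..} = (\<Union>N::nat. A \<times> {s<..s + real N + 1})"
  proof (intro set_eqI iffI)
    fix z assume z: "z \<in> A \<times> {s<..}"
    obtain N :: nat where "snd z - s \<le> real N" using real_arch_simple by blast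
    thus "z \<in> (\<Union>N::nat. A \<times> {s<..s + real N + 1})" using z by (intro UN_I[of N]) (auto simp: mem_Times_iff)
  qed (auto simp: mem_Times_iff)
  also have "\<dots> \<in> sets P" using assms by (intro sets.countable_UN image_subsetI predictable_rectangle) auto
  finally show ?thesis .
qed

lemma predictable_cylinder_F0:
  assumes "A \<in> sets (F 0)"
  shows "A \<times> ({0..} \<inter> {c<..}) \<in> sets P"
proof (cases "c < 0")
  case True
  hence "A \<times> ({0..} \<inter> {c<..}) = A \<times> {0} \<union> A \<times> {0<..}" by auto
  thus ?thesis using assms predictable_rectangle_0 predictable_rectangle_unbounded[of A 0] by auto
next
  case False
  hence "{0..} \<inter> {c<..} = {c<..}" by auto
  thus ?thesis using sets_F_mono[of 0 c] False assms predictable_rectangle_unbounded[of A c] by auto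
qed

lemma measurable_Pair_predictable:
  assumes "0 \<le> t"
  shows "(\<lambda>\<omega>. (\<omega>, t)) \<in> measurable M P"
  unfolding predictable_sigma_eq
proof (rule measurable_measure_of[OF predictable_gens_Pow])
  show "(\<lambda>\<omega>. (\<omega>, t)) \<in> space M \<rightarrow> space M \<times> {0..}" using assms by auto
  fix G assume "G \<in> predictable_gens"
  then obtain A s I where G: "G = A \<times> I" "0 \<le> s" "A \<in> sets (F s)"
    unfolding predictable_gens_def by blast
  have "A \<in> sets M" using G sets_F_subset by blast
  thus "(\<lambda>\<omega>. (\<omega>, t)) -` G \<inter> space M \<in> sets M"
    using G(1) sets.sets_into_space[of A M] by (cases "t \<in> I") (auto simp: Int_absorb2)
qed

definition stoch_after :: "('a \<Rightarrow> ereal) \<Rightarrow> ('a \<times> real) set" where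
  "stoch_after T = {(\<omega>, t). \<omega> \<in> space M \<and> 0 \<le> t \<and> T \<omega> < ereal t}"

definition stoch_upto :: "('a \<Rightarrow> ereal) \<Rightarrow> ('a \<times> real) set" where
  "stoch_upto T = {(\<omega>, t). \<omega> \<in> space M \<and> 0 \<le> t \<and> ereal t \<le> T \<omega>}"

definition stoch_from :: "('a \<Rightarrow> ereal) \<Rightarrow> ('a \<times> real) set" where
  "stoch_from T = {(\<omega>, t). \<omega> \<in> space M \<and> 0 \<le> t \<and> T \<omega> \<le> ereal t}"

lemma predictable_time_iff:
  "predictable_time M F T \<longleftrightarrow> stopping_time_e M F T \<and> stoch_from T \<in> sets P"
  by (simp add: predictable_time_def stoch_from_def)

lemma stoch_after_predictable:
  assumes T: "stopping_time_e M F T"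
  shows "stoch_after T \<in> sets P"
proof -
  have "stoch_after T = (\<Union>q\<in>\<rat>\<inter>{0..}. {\<omega>\<in>space M. T \<omega> \<le> ereal q} \<times> {q<..})"
  proof (intro set_eqI iffI)
    fix z assume "z \<in> stoch_after T"
    then obtain \<omega> t where z: "z = (\<omega>, t)" "\<omega> \<in> space M" "0 \<le> t" "T \<omega> < ereal t"
      by (auto simp: stoch_after_def)
    then obtain r where r: "T \<omega> = ereal r" "r < t"
      using stopping_time_nonneg[OF T] by (cases "T \<omega>") auto
    then obtain q where "q \<in> \<rat>" "r < q" "q < t" using Rats_dense_in_real by blast
    moreover have "0 \<le> r" using r stopping_time_nonneg[OF T z(2)] by simp
    ultimately show "z \<in> (\<Union>q\<in>\<rat>\<inter>{0..}. {\<omega>\<in>space M. T \<omega> \<le> ereal q} \<times> {q<..})"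
      using z r by (intro UN_I[of q]) auto
  next
    fix z assume "z \<in> (\<Union>q\<in>\<rat>\<inter>{0..}. {\<omega>\<in>space M. T \<omega> \<le> ereal q} \<times> {q<..})"
    then obtain q where q: "0 \<le> q" "fst z \<in> space M" "T (fst z) \<le> ereal q" "q < snd z"
      by (auto simp: mem_Times_iff)
    have "T (fst z) < ereal (snd z)" using q(3,4) by (auto intro: order.strict_trans1)
    thus "z \<in> stoch_after T" unfolding stoch_after_def using q by (cases z) auto
  qed
  also have "\<dots> \<in> sets P"
  proof (rule sets.countable_UN'')
    show "countable (\<rat> \<inter> {0::real..})" using countable_rat by (rule countable_subset[rotated]) auto
    fix q :: real assume "q \<in> \<rat> \<inter> {0..}"
    thus "{\<omega>\<in>space M. T \<omega> \<le> ereal q} \<times> {q<..} \<in> sets P"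
      using T by (intro predictable_rectangle_unbounded) (auto simp: stopping_time_e_def)
  qed
  finally show ?thesis .
qed

lemma stoch_upto_predictable: "stopping_time_e M F T \<Longrightarrow> stoch_upto T \<in> sets P"
proof -
  have "stoch_upto T = space P - stoch_after T"
    unfolding space_P stoch_upto_def stoch_after_def by auto
  thus "stopping_time_e M F T \<Longrightarrow> stoch_upto T \<in> sets P" using stoch_after_predictable by simp
qed

lemma stoch_from_predictable_F0:
  assumes T: "\<And>q. {\<omega>\<in>space M. T \<omega> \<le> ereal q} \<in> sets (F 0)"
  shows "stoch_from T \<in> sets P"
proof -
  have "stoch_from T = (\<Inter>m::nat. \<Union>q\<in>\<rat>. {\<omega>\<in>space M. T \<omega> \<le> ereal q} \<times> ({0..} \<inter> {q - 1 / (real m + 1)<..}))"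
  proof (intro set_eqI)
    fix z :: "'a \<times> real"
    obtain \<omega> t where z: "z = (\<omega>, t)" by (cases z)
    show "z \<in> stoch_from T \<longleftrightarrow>
        z \<in> (\<Inter>m::nat. \<Union>q\<in>\<rat>. {\<omega>\<in>space M. T \<omega> \<le> ereal q} \<times> ({0..} \<inter> {q - 1 / (real m + 1)<..}))"
      using ereal_le_iff_rational_approx[of "T \<omega>" t] unfolding z stoch_from_def by auto
  qed
  also have "\<dots> \<in> sets P"
  proof (rule sets.countable_INT, rule image_subsetI)
    fix m :: nat
    show "(\<Union>q\<in>\<rat>. {\<omega>\<in>space M. T \<omega> \<le> ereal q} \<times> ({0..} \<inter> {q - 1 / (real m + 1)<..})) \<in> sets P"
      using countable_rat by (rule sets.countable_UN'') (rule predictable_cylinder_F0[OF T])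
  qed simp
  finally show ?thesis .
qed

lemma predictable_time_null_modification:
  assumes S: "predictable_time M F S" and N: "N \<in> null_sets M"
    and eq: "\<And>\<omega>. \<omega> \<in> space M - N \<Longrightarrow> T \<omega> = S \<omega>" and T0: "\<And>\<omega>. \<omega> \<in> space M \<Longrightarrow> 0 \<le> T \<omega>"
  shows "predictable_time M F T"
proof -
  define R where "R \<omega> = (if \<omega> \<in> N then T \<omega> else \<infinity>)" for \<omega>
  have R: "{\<omega>\<in>space M. R \<omega> \<le> ereal q} \<in> sets (F 0)" for q
  proof -
    have "{\<omega>\<in>space M. R \<omega> \<le> ereal q} \<subseteq> N" by (auto simp: R_def split: if_splits)
    hence "{\<omega>\<in>space M. R \<omega> \<le> ereal q} \<in> null_sets M" using N by (rule complete2)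
    thus ?thesis using null_sets_F0 by auto
  qed
  have "N \<in> sets (F 0)" using N null_sets_F0 by auto
  hence compl_N: "space M - N \<in> sets (F 0)" using sets.compl_sets[of N "F 0"] space_F[of 0] by simp
  have S_stop: "stopping_time_e M F S" and S_P: "stoch_from S \<in> sets P"
    using S by (simp_all add: predictable_time_iff)
  have "stopping_time_e M F T"
    unfolding stopping_time_e_def
  proof (intro conjI ballI allI impI)
    fix t :: real assume t: "0 \<le> t"
    have "{\<omega>\<in>space M. T \<omega> \<le> ereal t} =
        ({\<omega>\<in>space M. S \<omega> \<le> ereal t} \<inter> (space M - N)) \<union> {\<omega>\<in>space M. R \<omega> \<le> ereal t}"
      using eq by (auto simp: R_def split: if_splits)
    also have "\<dots> \<in> sets (F t)"
    proof (intro sets.Un sets.Int)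
      show "{\<omega>\<in>space M. S \<omega> \<le> ereal t} \<in> sets (F t)" using S_stop t by (simp add: stopping_time_e_def)
      show "space M - N \<in> sets (F t)" using compl_N sets_F_mono[of 0 t] t by auto
      show "{\<omega>\<in>space M. R \<omega> \<le> ereal t} \<in> sets (F t)" using R sets_F_mono[of 0 t] t by auto
    qed
    finally show "{\<omega>\<in>space M. T \<omega> \<le> ereal t} \<in> sets (F t)" .
  qed (rule T0)
  moreover have "(space M - N) \<times> {0..} \<in> sets P"
    using predictable_cylinder_F0[OF compl_N, of "-1"] by (simp add: Int_absorb2 subset_eq)
  hence "stoch_from S \<inter> ((space M - N) \<times> {0..}) \<union> stoch_from R \<in> sets P"
    using S_P stoch_from_predictable_F0[OF R] by (intro sets.Un sets.Int)
  moreover have "stoch_from T = stoch_from S \<inter> ((space M - N) \<times> {0..}) \<union> stoch_from R"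
    using eq by (auto simp: stoch_from_def R_def split: if_splits)
  ultimately show ?thesis by (simp add: predictable_time_iff)
qed

end

definition dyadic_below :: "nat \<Rightarrow> real \<Rightarrow> real" where
  "dyadic_below m t = of_int (\<lceil>t * 2 ^ m\<rceil> - 1) / 2 ^ m"

lemma dyadic_below_tendsto: "filterlim (\<lambda>m. dyadic_below m t) (at_left t) sequentially"
proof -
  have lt: "dyadic_below m t < t" for m
  proof -
    have "of_int (\<lceil>t * 2 ^ m\<rceil> - 1) < t * 2 ^ m" by linarith
    thus ?thesis by (simp add: dyadic_below_def divide_less_eq)
  qed
  have ge: "t - 1 / 2 ^ m \<le> dyadic_below m t" for m
  proof -
    have "t * 2 ^ m - 1 \<le> of_int (\<lceil>t * 2 ^ m\<rceil> - 1)" by linarith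
    hence "(t * 2 ^ m - 1) / 2 ^ m \<le> dyadic_below m t" unfolding dyadic_below_def by (intro divide_right_mono) auto
    thus ?thesis by (simp add: diff_divide_distrib)
  qed
  have "(\<lambda>m. t - 1 / 2 ^ m) \<longlonglongrightarrow> t - 0"
    by (intro tendsto_diff tendsto_const LIMSEQ_divide_realpow_zero) simp
  hence low: "(\<lambda>m. t - 1 / 2 ^ m) \<longlonglongrightarrow> t" by simp
  have e1: "eventually (\<lambda>m. t - 1 / 2 ^ m \<le> dyadic_below m t) sequentially" using ge by simp
  have e2: "eventually (\<lambda>m. dyadic_below m t \<le> t) sequentially" using lt by (simp add: less_imp_le)
  have lim: "(\<lambda>m. dyadic_below m t) \<longlonglongrightarrow> t" by (rule tendsto_sandwich[OF e1 e2 low tendsto_const])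
  have e3: "eventually (\<lambda>m. dyadic_below m t \<in> {..<t} \<and> dyadic_below m t \<noteq> t) sequentially"
    using lt by (simp add: less_imp_neq)
  show ?thesis unfolding filterlim_at by (intro conjI e3 lim)
qed

lemma dyadic_below_eq_iff:
  "dyadic_below m t = real k / 2 ^ m \<longleftrightarrow> real k / 2 ^ m < t \<and> t \<le> (real k + 1) / 2 ^ m"
proof -
  have "dyadic_below m t = real k / 2 ^ m \<longleftrightarrow> \<lceil>t * 2 ^ m\<rceil> = int k + 1"
    unfolding dyadic_below_def by (auto simp: divide_cancel_right)
  also have "\<dots> \<longleftrightarrow> real k < t * 2 ^ m \<and> t * 2 ^ m \<le> real k + 1" by (simp add: ceiling_eq_iff)
  also have "\<dots> \<longleftrightarrow> real k / 2 ^ m < t \<and> t \<le> (real k + 1) / 2 ^ m"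
    by (simp add: divide_less_eq le_divide_eq)
  finally show ?thesis .
qed

lemma dyadic_below_natural:
  assumes "0 < t"
  obtains k :: nat where "dyadic_below m t = real k / 2 ^ m"
proof -
  have "1 \<le> \<lceil>t * 2 ^ m\<rceil>" using assms by (simp add: one_le_ceiling)
  hence "of_int (\<lceil>t * 2 ^ m\<rceil> - 1) = real (nat (\<lceil>t * 2 ^ m\<rceil> - 1))" by simp
  thus ?thesis using that unfolding dyadic_below_def by metis
qed

lemma dyadic_above_tendsto:
  fixes t :: real
  shows "filterlim (\<lambda>m::nat. (of_int \<lfloor>t * 2 ^ m\<rfloor> + 1) / 2 ^ m) (at_right t) sequentially"
proof -
  let ?d = "\<lambda>m::nat. (of_int \<lfloor>t * 2 ^ m\<rfloor> + 1) / (2::real) ^ m"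
  have gt: "t < ?d m" for m
  proof -
    have "t * 2 ^ m < of_int \<lfloor>t * 2 ^ m\<rfloor> + 1" by linarith
    thus ?thesis by (simp add: less_divide_eq)
  qed
  have le: "?d m \<le> t + 1 / 2 ^ m" for m
  proof -
    have "of_int \<lfloor>t * 2 ^ m\<rfloor> + 1 \<le> t * 2 ^ m + 1" by linarith
    hence "?d m \<le> (t * 2 ^ m + 1) / 2 ^ m" by (intro divide_right_mono) auto
    thus ?thesis by (simp add: add_divide_distrib)
  qed
  have "(\<lambda>m. t + 1 / 2 ^ m) \<longlonglongrightarrow> t + 0"
    by (intro tendsto_add tendsto_const LIMSEQ_divide_realpow_zero) simp
  hence up: "(\<lambda>m. t + 1 / 2 ^ m) \<longlonglongrightarrow> t" by simp
  have e1: "eventually (\<lambda>m. t \<le> ?d m) sequentially" using gt by (simp add: less_imp_le)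
  have e2: "eventually (\<lambda>m. ?d m \<le> t + 1 / 2 ^ m) sequentially" using le by simp
  have lim: "?d \<longlonglongrightarrow> t" by (rule tendsto_sandwich[OF e1 e2 tendsto_const up])
  have e3: "eventually (\<lambda>m. ?d m \<in> {t<..} \<and> ?d m \<noteq> t) sequentially"
    using gt by (simp add: less_imp_neq[symmetric])
  show ?thesis unfolding filterlim_at by (intro conjI e3 lim)
qed

lemma ereal_le_iff_less_approx:
  fixes h :: ereal
  assumes "t < s"
  shows "h \<le> ereal t \<longleftrightarrow> (\<forall>m::nat. h < ereal (t + (s - t) / (real m + 1)))"
proof
  assume "h \<le> ereal t"
  moreover have "ereal t < ereal (t + (s - t) / (real m + 1))" for m using assms by simp
  ultimately show "\<forall>m::nat. h < ereal (t + (s - t) / (real m + 1))" using le_less_trans by blast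
next
  assume H: "\<forall>m::nat. h < ereal (t + (s - t) / (real m + 1))"
  show "h \<le> ereal t"
  proof (rule ccontr)
    assume "\<not> h \<le> ereal t"
    moreover have "h \<noteq> \<infinity>" using H by auto
    ultimately obtain r where r: "h = ereal r" "t < r" by (cases h) auto
    obtain m where m: "inverse (real (Suc m)) < (r - t) / (s - t)"
      using reals_Archimedean[of "(r - t) / (s - t)"] r assms by auto
    have "(s - t) / (real m + 1) = (s - t) * inverse (real (Suc m))" by (simp add: field_simps)
    also have "\<dots> < (s - t) * ((r - t) / (s - t))" using m assms by (intro mult_strict_left_mono) auto
    also have "\<dots> = r - t" using assms by simp
    finally show False using H[rule_format, of m] r by simp
  qed
qed

locale adapted_cadlag = usual_filtered_space +
  fixes Z :: "real \<Rightarrow> 'a \<Rightarrow> real"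
  assumes adapted: "adapted M F Z" and cadlag: "cadlag_process M Z"
begin

abbreviation sample_path :: "'a \<Rightarrow> real \<Rightarrow> real" where
  "sample_path \<omega> \<equiv> \<lambda>t. Z t \<omega>"

lemma sample_path_cadlag: "\<omega> \<in> space M \<Longrightarrow> cadlag (sample_path \<omega>)"
  using cadlag by (simp add: cadlag_process_def)

lemma measurable_F: "0 \<le> t \<Longrightarrow> Z t \<in> borel_measurable (F t)"
  using adapted by (simp add: adapted_def)

lemma measurable_M: "0 \<le> t \<Longrightarrow> Z t \<in> borel_measurable M"
  using measurable_F[of t] space_F[of t] sets_F_subset[of t] by (auto simp: measurable_def)

lemma greater_in_F:
  assumes "0 \<le> t"
  shows "{\<omega>\<in>space M. c < Z t \<omega>} \<in> sets (F t)"
proof -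
  have "{\<omega>\<in>space (F t). c < Z t \<omega>} \<in> sets (F t)" using measurable_F[OF assms] by measurable
  thus ?thesis using space_F[OF assms] by simp
qed

lemma approach_time_less_eq_rational_UN:
  assumes "0 < u"
  shows "{\<omega>\<in>space M. approach_time (sample_path \<omega>) n < ereal u} =
    (\<Union>q\<in>\<rat>\<inter>{0..<u}. {\<omega>\<in>space M. level n < Z q \<omega>})"
proof (intro set_eqI iffI)
  fix \<omega> assume "\<omega> \<in> {\<omega>\<in>space M. approach_time (sample_path \<omega>) n < ereal u}"
  then obtain a where \<omega>: "\<omega> \<in> space M" and a: "0 \<le> a" "level n < Z a \<omega>" "a < u"
    unfolding approach_time_def first_time_less_iff by auto
  have "(sample_path \<omega> \<longlongrightarrow> Z a \<omega>) (at_right a)"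
    using sample_path_cadlag[OF \<omega>] a(1) by (simp add: cadlag_def continuous_within)
  hence "eventually (\<lambda>t. level n < Z t \<omega>) (at_right a)" using a(2) by (rule order_tendstoD)
  then obtain d where d: "a < d" "\<And>t. a < t \<Longrightarrow> t < d \<Longrightarrow> level n < Z t \<omega>"
    by (auto simp: eventually_at_right_field)
  obtain q where "q \<in> \<rat>" "a < q" "q < min d u"
    using Rats_dense_in_real[of a "min d u"] d(1) a(3) by auto
  thus "\<omega> \<in> (\<Union>q\<in>\<rat>\<inter>{0..<u}. {\<omega>\<in>space M. level n < Z q \<omega>})" using d(2)[of q] a(1) \<omega> by auto
next
  fix \<omega> assume "\<omega> \<in> (\<Union>q\<in>\<rat>\<inter>{0..<u}. {\<omega>\<in>space M. level n < Z q \<omega>})"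
  then obtain q where q: "0 \<le> q" "q < u" "level n < Z q \<omega>" and \<omega>: "\<omega> \<in> space M" by auto
  have "approach_time (sample_path \<omega>) n \<le> ereal q" unfolding approach_time_def using q by (intro first_time_le) simp
  also have "\<dots> < ereal u" using q by simp
  finally show "\<omega> \<in> {\<omega>\<in>space M. approach_time (sample_path \<omega>) n < ereal u}" using \<omega> by simp
qed

lemma approach_time_less_in_F:
  assumes "0 < u" "u \<le> s"
  shows "{\<omega>\<in>space M. approach_time (sample_path \<omega>) n < ereal u} \<in> sets (F s)"
  unfolding approach_time_less_eq_rational_UN[OF assms(1)]
proof (rule sets.countable_UN'')
  show "countable (\<rat>\<inter>{0..<u})" using countable_rat by (rule countable_subset[rotated]) auto
  fix q assume "q \<in> \<rat>\<inter>{0..<u}"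
  thus "{\<omega>\<in>space M. level n < Z q \<omega>} \<in> sets (F s)"
    using greater_in_F[of q] sets_F_mono[of q s] assms by auto
qed

lemma approach_time_le_in_F:
  assumes t: "0 \<le> t"
  shows "{\<omega>\<in>space M. approach_time (sample_path \<omega>) n \<le> ereal t} \<in> sets (F t)"
proof (rule sets_F_right_continuous[OF t])
  fix s assume s: "t < s"
  have "{\<omega>\<in>space M. approach_time (sample_path \<omega>) n \<le> ereal t} =
      (\<Inter>m. {\<omega>\<in>space M. approach_time (sample_path \<omega>) n < ereal (t + (s - t) / (real m + 1))})"
    using ereal_le_iff_less_approx[OF s] by auto
  also have "\<dots> \<in> sets (F s)"
  proof (rule sets.countable_INT, rule image_subsetI)
    fix m :: nat
    have "0 < (s - t) / (real m + 1)" "(s - t) / (real m + 1) \<le> s - t" using s by (simp_all add: divide_le_eq)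
    thus "{\<omega>\<in>space M. approach_time (sample_path \<omega>) n < ereal (t + (s - t) / (real m + 1))} \<in> sets (F s)"
      using t by (intro approach_time_less_in_F) auto
  qed simp
  finally show "{\<omega>\<in>space M. approach_time (sample_path \<omega>) n \<le> ereal t} \<in> sets (F s)" .
qed

lemma approach_time_stopping_time: "stopping_time_e M F (\<lambda>\<omega>. approach_time (sample_path \<omega>) n)"
  unfolding stopping_time_e_def using approach_time_le_in_F approach_time_nonneg by auto

lemma approach_limit_le_in_F:
  assumes "0 \<le> t"
  shows "{\<omega>\<in>space M. approach_limit (sample_path \<omega>) \<le> ereal t} \<in> sets (F t)"
proof -
  have "{\<omega>\<in>space M. approach_limit (sample_path \<omega>) \<le> ereal t} =
      (\<Inter>n. {\<omega>\<in>space M. approach_time (sample_path \<omega>) n \<le> ereal t})"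
    by (auto simp: approach_limit_def SUP_le_iff)
  also have "\<dots> \<in> sets (F t)" using approach_time_le_in_F[OF assms] by (intro sets.countable_INT) auto
  finally show ?thesis .
qed

lemma approach_limit_stopping_time: "stopping_time_e M F (\<lambda>\<omega>. approach_limit (sample_path \<omega>))"
  unfolding stopping_time_e_def using approach_limit_le_in_F approach_limit_nonneg by auto

lemma approach_time_measurable [measurable]: "(\<lambda>\<omega>. approach_time (sample_path \<omega>) n) \<in> borel_measurable M"
  by (rule stopping_time_measurable[OF approach_time_stopping_time])

lemma approach_limit_measurable [measurable]: "(\<lambda>\<omega>. approach_limit (sample_path \<omega>)) \<in> borel_measurable M"
  by (rule stopping_time_measurable[OF approach_limit_stopping_time])

lemma creeping_measurable [measurable]: "Measurable.pred M (\<lambda>\<omega>. creeping (sample_path \<omega>))"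
  unfolding creeping_def by measurable

definition creeping_time :: "'a \<Rightarrow> ereal" where
  "creeping_time \<omega> = (if creeping (sample_path \<omega>) then approach_limit (sample_path \<omega>) else \<infinity>)"

lemma creeping_time_stopping_time: "stopping_time_e M F creeping_time"
  unfolding stopping_time_e_def
proof (intro conjI ballI allI impI)
  fix \<omega> show "0 \<le> creeping_time \<omega>"
    unfolding creeping_time_def using approach_limit_nonneg[of "sample_path \<omega>"] by simp
next
  fix t :: real assume t: "0 \<le> t"
  have "{\<omega>\<in>space M. creeping_time \<omega> \<le> ereal t} =
      (\<Inter>n. {\<omega>\<in>space M. approach_time (sample_path \<omega>) n < approach_limit (sample_path \<omega>) \<and>
        approach_limit (sample_path \<omega>) \<le> ereal t})"
    unfolding creeping_time_def creeping_def by (auto split: if_splits)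
  also have "\<dots> \<in> sets (F t)"
    using stopping_time_less_le_in_F[OF approach_time_stopping_time approach_limit_stopping_time t]
    by (intro sets.countable_INT) auto
  finally show "{\<omega>\<in>space M. creeping_time \<omega> \<le> ereal t} \<in> sets (F t)" .
qed

definition creeping_graph :: "nat \<Rightarrow> ('a \<times> real) set" where
  "creeping_graph k = {(\<omega>, t). \<omega> \<in> space M \<and> 0 \<le> t \<and> (\<forall>n. approach_time (sample_path \<omega>) n < ereal t) \<and>
     ereal t \<le> approach_limit (sample_path \<omega>) \<and> t \<le> real k}"

lemma creeping_graph_predictable: "creeping_graph k \<in> sets P"
proof -
  have "creeping_graph k = (\<Inter>n. stoch_after (\<lambda>\<omega>. approach_time (sample_path \<omega>) n)) \<inter>
      stoch_upto (\<lambda>\<omega>. approach_limit (sample_path \<omega>)) \<inter> stoch_upto (\<lambda>_. ereal (real k))"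
    unfolding creeping_graph_def stoch_after_def stoch_upto_def by auto
  also have "\<dots> \<in> sets P"
    using stoch_after_predictable[OF approach_time_stopping_time]
      stoch_upto_predictable[OF approach_limit_stopping_time]
      stoch_upto_predictable[OF stopping_time_const[of "real k"]]
    by (intro sets.Int sets.countable_INT) auto
  finally show ?thesis .
qed

lemma mem_creeping_graph:
  "(\<omega>, t) \<in> creeping_graph k \<longleftrightarrow>
    \<omega> \<in> space M \<and> creeping (sample_path \<omega>) \<and> approach_limit (sample_path \<omega>) = ereal t \<and> t \<le> real k"
proof
  assume "(\<omega>, t) \<in> creeping_graph k"
  hence lt: "\<forall>n. approach_time (sample_path \<omega>) n < ereal t"
    and le: "ereal t \<le> approach_limit (sample_path \<omega>)" and rest: "\<omega> \<in> space M" "t \<le> real k"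
    unfolding creeping_graph_def by auto
  have "approach_limit (sample_path \<omega>) \<le> ereal t"
    unfolding approach_limit_def using lt by (intro SUP_least less_imp_le) auto
  hence "approach_limit (sample_path \<omega>) = ereal t" using le by simp
  thus "\<omega> \<in> space M \<and> creeping (sample_path \<omega>) \<and> approach_limit (sample_path \<omega>) = ereal t \<and> t \<le> real k"
    using lt rest unfolding creeping_def by simp
next
  assume "\<omega> \<in> space M \<and> creeping (sample_path \<omega>) \<and> approach_limit (sample_path \<omega>) = ereal t \<and> t \<le> real k"
  thus "(\<omega>, t) \<in> creeping_graph k"
    using approach_limit_nonneg[of "sample_path \<omega>"] unfolding creeping_graph_def creeping_def by auto
qed

lemma stoch_from_creeping_time_predictable: "stoch_from creeping_time \<in> sets P"
proof -
  have "stoch_from creeping_time = (\<Union>k. creeping_graph k) \<union> stoch_after creeping_time"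
  proof (intro set_eqI iffI)
    fix z assume "z \<in> stoch_from creeping_time"
    then obtain \<omega> t where z: "z = (\<omega>, t)" "\<omega> \<in> space M" "0 \<le> t" "creeping_time \<omega> \<le> ereal t"
      by (auto simp: stoch_from_def)
    show "z \<in> (\<Union>k. creeping_graph k) \<union> stoch_after creeping_time"
    proof (cases "creeping_time \<omega> = ereal t")
      case True
      obtain k :: nat where "t \<le> real k" using real_arch_simple by blast
      hence "(\<omega>, t) \<in> creeping_graph k"
        using True z(2) by (simp add: mem_creeping_graph creeping_time_def split: if_splits)
      thus ?thesis using z(1) by blast
    next
      case False
      hence "creeping_time \<omega> < ereal t" using z(4) by simp
      thus ?thesis using z by (simp add: stoch_after_def)
    qed
  next
    fix z assume z: "z \<in> (\<Union>k. creeping_graph k) \<union> stoch_after creeping_time"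
    obtain \<omega> t where zz: "z = (\<omega>, t)" by (cases z)
    show "z \<in> stoch_from creeping_time"
    proof (cases "z \<in> stoch_after creeping_time")
      case True thus ?thesis using zz by (auto simp: stoch_after_def stoch_from_def)
    next
      case False
      then obtain k where "(\<omega>, t) \<in> creeping_graph k" using z zz by auto
      hence "\<omega> \<in> space M" "creeping (sample_path \<omega>)" "approach_limit (sample_path \<omega>) = ereal t"
        by (simp_all add: mem_creeping_graph)
      moreover have "0 \<le> t" using calculation(3) approach_limit_nonneg[of "sample_path \<omega>"] by simp
      ultimately show ?thesis using zz by (simp add: stoch_from_def creeping_time_def)
    qed
  qed
  also have "\<dots> \<in> sets P"
    using creeping_graph_predictable stoch_after_predictable[OF creeping_time_stopping_time] by auto
  finally show ?thesis .
qed

lemma dyadic_step_process_greater_eq: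
  "{z \<in> space P. a < Z (if snd z = 0 then 0 else dyadic_below m (snd z)) (fst z)} =
    {\<omega>\<in>space M. a < Z 0 \<omega>} \<times> {0} \<union>
    (\<Union>k::nat. {\<omega>\<in>space M. a < Z (real k / 2 ^ m) \<omega>} \<times> {real k / 2 ^ m<..(real k + 1) / 2 ^ m})"
    (is "_ = _ \<union> ?U")
proof (intro set_eqI)
  fix z :: "'a \<times> real"
  obtain \<omega> t where z: "z = (\<omega>, t)" by (cases z)
  show "z \<in> {z \<in> space P. a < Z (if snd z = 0 then 0 else dyadic_below m (snd z)) (fst z)} \<longleftrightarrow>
      z \<in> {\<omega>\<in>space M. a < Z 0 \<omega>} \<times> {0} \<union> ?U"
  proof (cases "0 < t")
    case True
    then obtain k :: nat where k: "dyadic_below m t = real k / 2 ^ m" by (rule dyadic_below_natural)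
    have "(\<omega>, t) \<in> ?U \<longleftrightarrow> \<omega> \<in> space M \<and> a < Z (real k / 2 ^ m) \<omega>"
    proof
      assume "(\<omega>, t) \<in> ?U"
      then obtain j :: nat where j: "\<omega> \<in> space M" "a < Z (real j / 2 ^ m) \<omega>"
        "real j / 2 ^ m < t" "t \<le> (real j + 1) / 2 ^ m" by auto
      hence "dyadic_below m t = real j / 2 ^ m" using dyadic_below_eq_iff[of m t j] by simp
      hence "j = k" using k by simp
      thus "\<omega> \<in> space M \<and> a < Z (real k / 2 ^ m) \<omega>" using j by simp
    next
      assume "\<omega> \<in> space M \<and> a < Z (real k / 2 ^ m) \<omega>"
      thus "(\<omega>, t) \<in> ?U" using k dyadic_below_eq_iff[of m t k] by (intro UN_I[of k]) auto
    qed
    thus ?thesis using True k by (simp add: z space_P)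
  next
    case False
    have "(\<omega>, t) \<notin> ?U"
    proof
      assume "(\<omega>, t) \<in> ?U"
      then obtain j :: nat where "real j / 2 ^ m < t" by auto
      moreover have "0 \<le> real j / 2 ^ m" by simp
      ultimately show False using False by linarith
    qed
    thus ?thesis using False by (auto simp: z space_P)
  qed
qed

lemma dyadic_step_process_predictable:
  "(\<lambda>z. Z (if snd z = 0 then 0 else dyadic_below m (snd z)) (fst z)) \<in> borel_measurable P"
proof (rule borel_measurableI_greater)
  fix a :: real
  let ?p = "(2::real) ^ m"
  have "{\<omega>\<in>space M. a < Z 0 \<omega>} \<times> {0} \<in> sets P"
    by (intro predictable_rectangle_0 greater_in_F) simp
  moreover have "(\<Union>k::nat. {\<omega>\<in>space M. a < Z (real k / ?p) \<omega>} \<times> {real k / ?p<..(real k + 1) / ?p}) \<in> sets P"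
  proof (rule sets.countable_UN, rule image_subsetI)
    fix k :: nat
    show "{\<omega>\<in>space M. a < Z (real k / ?p) \<omega>} \<times> {real k / ?p<..(real k + 1) / ?p} \<in> sets P"
      by (intro predictable_rectangle greater_in_F) (auto simp: divide_strict_right_mono)
  qed
  ultimately show "{z \<in> space P. a < Z (if snd z = 0 then 0 else dyadic_below m (snd z)) (fst z)} \<in> sets P"
    unfolding dyadic_step_process_greater_eq by auto
qed

lemma left_lim_predictable: "(\<lambda>z. left_lim (sample_path (fst z)) (snd z)) \<in> borel_measurable P"
proof (rule borel_measurable_LIMSEQ_real[OF _ dyadic_step_process_predictable])
  fix z assume "z \<in> space P"
  moreover obtain \<omega> t where z: "z = (\<omega>, t)" by (cases z)
  ultimately have \<omega>: "\<omega> \<in> space M" and t: "0 \<le> t" by (auto simp: space_P)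
  show "(\<lambda>m. Z (if snd z = 0 then 0 else dyadic_below m (snd z)) (fst z)) \<longlonglongrightarrow>
      left_lim (sample_path (fst z)) (snd z)"
  proof (cases "t = 0")
    case True thus ?thesis using z by (simp add: left_lim_def)
  next
    case False
    hence "0 < t" using t by simp
    have "(\<lambda>m. Z (dyadic_below m t) \<omega>) \<longlonglongrightarrow> left_lim (sample_path \<omega>) t"
      using cadlag_tendsto_left_lim[OF sample_path_cadlag[OF \<omega>] \<open>0 < t\<close>] dyadic_below_tendsto
      by (rule filterlim_compose)
    thus ?thesis using z False by simp
  qed
qed

lemma measurable_at_random_time:
  assumes R: "R \<in> borel_measurable M" and R0: "\<And>\<omega>. \<omega> \<in> space M \<Longrightarrow> 0 \<le> R \<omega>"
  shows "(\<lambda>\<omega>. Z (R \<omega>) \<omega>) \<in> borel_measurable M"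
proof (rule borel_measurable_LIMSEQ_real)
  fix \<omega> assume \<omega>: "\<omega> \<in> space M"
  have "(sample_path \<omega> \<longlongrightarrow> Z (R \<omega>) \<omega>) (at_right (R \<omega>))"
    using sample_path_cadlag[OF \<omega>] R0[OF \<omega>] by (simp add: cadlag_def continuous_within)
  thus "(\<lambda>m. Z ((of_int \<lfloor>R \<omega> * 2 ^ m\<rfloor> + 1) / 2 ^ m) \<omega>) \<longlonglongrightarrow> Z (R \<omega>) \<omega>"
    using dyadic_above_tendsto by (rule filterlim_compose)
next
  fix m :: nat
  let ?p = "(2::real) ^ m"
  have "(\<lambda>\<omega>. \<lfloor>R \<omega> * ?p\<rfloor>) \<in> measurable M (count_space UNIV)"
    using R by measurable
  moreover have "(\<lambda>\<omega>. Z (max 0 ((of_int i + 1) / ?p)) \<omega>) \<in> borel_measurable M" for i :: int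
    by (rule measurable_M) simp
  ultimately have "(\<lambda>\<omega>. Z (max 0 ((of_int \<lfloor>R \<omega> * ?p\<rfloor> + 1) / ?p)) \<omega>) \<in> borel_measurable M"
    by (rule measurable_compose_countable[rotated])
  moreover have "max 0 ((of_int \<lfloor>R \<omega> * ?p\<rfloor> + 1) / ?p) = (of_int \<lfloor>R \<omega> * ?p\<rfloor> + 1) / ?p"
    if "\<omega> \<in> space M" for \<omega>
  proof -
    have "0 \<le> R \<omega> * ?p" using R0[OF that] by simp
    hence "0 \<le> of_int \<lfloor>R \<omega> * ?p\<rfloor> + (1::real)" by linarith
    thus ?thesis by simp
  qed
  ultimately show "(\<lambda>\<omega>. Z ((of_int \<lfloor>R \<omega> * ?p\<rfloor> + 1) / ?p) \<omega>) \<in> borel_measurable M"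
    by (subst measurable_cong[symmetric]) auto
qed

end

lemma sets_jump_measure: "sets (jump_measure X \<omega>) = sets borel"
  by (simp add: jump_measure_def)

lemma nn_integral_jump_measure_eq_0:
  assumes f: "f \<in> borel_measurable borel"
    and zero: "\<And>s. 0 < s \<Longrightarrow> jump (\<lambda>t. X t \<omega>) s \<noteq> 0 \<Longrightarrow> f (s, jump (\<lambda>t. X t \<omega>) s) = 0"
  shows "(\<integral>\<^sup>+ p. f p \<partial>jump_measure X \<omega>) = 0"
proof -
  let ?S = "{s. 0 < s \<and> jump (\<lambda>t. X t \<omega>) s \<noteq> 0}"
  have "(\<integral>\<^sup>+ p. f p \<partial>jump_measure X \<omega>) = (\<integral>\<^sup>+ s. f (s, jump (\<lambda>t. X t \<omega>) s) \<partial>count_space ?S)"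
    unfolding jump_measure_def by (rule nn_integral_distr) (simp_all add: f)
  also have "\<dots> = (\<integral>\<^sup>+ s. 0 \<partial>count_space ?S)" by (rule nn_integral_cong) (simp add: zero)
  finally show ?thesis by simp
qed

lemma nn_integral_jump_measure_ge_1:
  assumes s: "0 < s" "jump (\<lambda>t. X t \<omega>) s \<noteq> 0" and f: "1 \<le> f (s, jump (\<lambda>t. X t \<omega>) s)"
  shows "1 \<le> (\<integral>\<^sup>+ p. f p \<partial>jump_measure X \<omega>)"
proof -
  let ?S = "{s. 0 < s \<and> jump (\<lambda>t. X t \<omega>) s \<noteq> 0}"
  let ?g = "\<lambda>s. (s, jump (\<lambda>t. X t \<omega>) s)"
  have "emeasure (jump_measure X \<omega>) {?g s} = emeasure (count_space ?S) (?g -` {?g s} \<inter> ?S)"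
    unfolding jump_measure_def by (subst emeasure_distr) simp_all
  also have "?g -` {?g s} \<inter> ?S = {s}" using s by auto
  finally have "emeasure (jump_measure X \<omega>) {?g s} = 1" using s by simp
  hence "(\<integral>\<^sup>+ p. indicator {?g s} p \<partial>jump_measure X \<omega>) = 1"
    by (subst nn_integral_indicator) (simp_all add: sets_jump_measure)
  moreover have "(\<integral>\<^sup>+ p. indicator {?g s} p \<partial>jump_measure X \<omega>) \<le> (\<integral>\<^sup>+ p. f p \<partial>jump_measure X \<omega>)"
    using f by (intro nn_integral_mono) (auto split: split_indicator)
  ultimately show ?thesis by simp
qed

lemma nn_integral_upto_eq:
  fixes W :: "('a \<times> real) \<times> real \<Rightarrow> ennreal"
  assumes "\<And>s x. W ((\<omega>, s), x) \<noteq> 0 \<Longrightarrow> s \<le> t"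
  shows "(\<integral>\<^sup>+ p. indicator {..t} (fst p) * W ((\<omega>, fst p), snd p) \<partial>N) = (\<integral>\<^sup>+ p. W ((\<omega>, fst p), snd p) \<partial>N)"
proof (rule nn_integral_cong)
  fix p :: "real \<times> real"
  show "indicator {..t} (fst p) * W ((\<omega>, fst p), snd p) = W ((\<omega>, fst p), snd p)"
    using assms[of "fst p" "snd p"] by (cases "W ((\<omega>, fst p), snd p) = 0") (auto split: split_indicator)
qed

locale compensated_jumps = usual_filtered_space +
  fixes X :: "real \<Rightarrow> 'a \<Rightarrow> real" and \<nu> :: "'a \<Rightarrow> (real \<times> real) measure"
  assumes compensator: "compensator M F X \<nu>"
begin

lemma sets_compensator: "\<omega> \<in> space M \<Longrightarrow> sets (\<nu> \<omega>) = sets borel"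
  using compensator by (simp add: compensator_def)

lemma compensator_running_integral_predictable:
  "W \<in> borel_measurable (P \<Otimes>\<^sub>M borel) \<Longrightarrow>
    (\<lambda>(\<omega>, t). \<integral>\<^sup>+ p. indicator {..t} (fst p) * W ((\<omega>, fst p), snd p) \<partial>\<nu> \<omega>) \<in> borel_measurable P"
  using compensator unfolding compensator_def by blast

lemma compensator_nn_integral_eq:
  "W \<in> borel_measurable (P \<Otimes>\<^sub>M borel) \<Longrightarrow>
    (\<integral>\<^sup>+ \<omega>. (\<integral>\<^sup>+ p. W ((\<omega>, fst p), snd p) \<partial>jump_measure X \<omega>) \<partial>M) =
    (\<integral>\<^sup>+ \<omega>. (\<integral>\<^sup>+ p. W ((\<omega>, fst p), snd p) \<partial>\<nu> \<omega>) \<partial>M)"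
  using compensator unfolding compensator_def by blast

lemma null_set_if_compensator_vanishes:
  assumes W: "W \<in> borel_measurable (P \<Otimes>\<^sub>M borel)"
    and nu: "AE \<omega> in M. (\<integral>\<^sup>+ q. W ((\<omega>, fst q), snd q) \<partial>\<nu> \<omega>) = 0"
    and E: "E \<in> sets M"
    and mu: "\<And>\<omega>. \<omega> \<in> E \<Longrightarrow> 1 \<le> (\<integral>\<^sup>+ q. W ((\<omega>, fst q), snd q) \<partial>jump_measure X \<omega>)"
  shows "E \<in> null_sets M"
proof -
  have "emeasure M E = (\<integral>\<^sup>+ \<omega>. indicator E \<omega> \<partial>M)" using E by simp
  also have "\<dots> \<le> (\<integral>\<^sup>+ \<omega>. (\<integral>\<^sup>+ q. W ((\<omega>, fst q), snd q) \<partial>jump_measure X \<omega>) \<partial>M)"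
    using mu by (intro nn_integral_mono) (auto split: split_indicator)
  also have "\<dots> = (\<integral>\<^sup>+ \<omega>. (\<integral>\<^sup>+ q. W ((\<omega>, fst q), snd q) \<partial>\<nu> \<omega>) \<partial>M)"
    by (rule compensator_nn_integral_eq[OF W])
  also have "\<dots> = 0" using nu by (simp add: nn_integral_0_iff_AE nn_integral_cong_AE)
  finally show ?thesis using E by auto
qed

text \<open>The \<open>\<nu>\<close>-mass of a predictable \<open>W\<close> living on the graph of a random time is the value of its
  predictable running integral at that time; weighting \<open>W\<close> by this running integral and
  compensating gives the identity below.\<close>
lemma compensator_mass_on_graph_squared:
  assumes W: "W \<in> borel_measurable (P \<Otimes>\<^sub>M borel)"
    and sections: "\<And>\<omega>. \<omega> \<in> space M \<Longrightarrow> (\<lambda>q. W ((\<omega>, fst q), snd q)) \<in> borel_measurable borel"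
    and graph: "\<And>\<omega> t x. \<omega> \<in> space M \<Longrightarrow> W ((\<omega>, t), x) \<noteq> 0 \<Longrightarrow> t = R \<omega>"
  shows "(\<integral>\<^sup>+\<omega>. (\<integral>\<^sup>+q. W ((\<omega>, fst q), snd q) \<partial>\<nu> \<omega>) * (\<integral>\<^sup>+q. W ((\<omega>, fst q), snd q) \<partial>\<nu> \<omega>) \<partial>M) =
    (\<integral>\<^sup>+\<omega>. (\<integral>\<^sup>+q. W ((\<omega>, fst q), snd q) \<partial>\<nu> \<omega>) * (\<integral>\<^sup>+q. W ((\<omega>, fst q), snd q) \<partial>jump_measure X \<omega>) \<partial>M)"
proof -
  define K where "K = (\<lambda>(\<omega>, t). \<integral>\<^sup>+ p. indicator {..t} (fst p) * W ((\<omega>, fst p), snd p) \<partial>\<nu> \<omega>)"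
  define nu_mass where "nu_mass \<omega> = (\<integral>\<^sup>+ q. W ((\<omega>, fst q), snd q) \<partial>\<nu> \<omega>)" for \<omega>
  define W2 where "W2 z = K (fst z) * W z" for z
  have "K \<in> borel_measurable P" unfolding K_def by (rule compensator_running_integral_predictable[OF W])
  hence W2: "W2 \<in> borel_measurable (P \<Otimes>\<^sub>M borel)" unfolding W2_def using W by measurable
  have weight: "W2 ((\<omega>, t), x) = nu_mass \<omega> * W ((\<omega>, t), x)" if \<omega>: "\<omega> \<in> space M" for \<omega> t x
  proof (cases "W ((\<omega>, t), x) = 0")
    case False
    have "K (\<omega>, t) = nu_mass \<omega>" unfolding K_def nu_mass_def
      using graph[OF \<omega>] graph[OF \<omega> False] by (simp add: nn_integral_upto_eq)
    thus ?thesis by (simp add: W2_def)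
  qed (simp add: W2_def)
  have weighted: "(\<integral>\<^sup>+q. W2 ((\<omega>, fst q), snd q) \<partial>N) = nu_mass \<omega> * (\<integral>\<^sup>+q. W ((\<omega>, fst q), snd q) \<partial>N)"
    if \<omega>: "\<omega> \<in> space M" and N: "sets N = sets borel" for \<omega> and N :: "(real \<times> real) measure"
    using weight[OF \<omega>] sections[OF \<omega>]
    by (simp add: nn_integral_cmult measurable_cong_sets[OF N refl])
  have "(\<integral>\<^sup>+\<omega>. nu_mass \<omega> * nu_mass \<omega> \<partial>M) = (\<integral>\<^sup>+\<omega>. (\<integral>\<^sup>+q. W2 ((\<omega>, fst q), snd q) \<partial>\<nu> \<omega>) \<partial>M)"
    using weighted sets_compensator by (intro nn_integral_cong) (simp add: nu_mass_def)
  also have "\<dots> = (\<integral>\<^sup>+\<omega>. (\<integral>\<^sup>+q. W2 ((\<omega>, fst q), snd q) \<partial>jump_measure X \<omega>) \<partial>M)"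
    by (rule compensator_nn_integral_eq[OF W2, symmetric])
  also have "\<dots> = (\<integral>\<^sup>+\<omega>. nu_mass \<omega> * (\<integral>\<^sup>+q. W ((\<omega>, fst q), snd q) \<partial>jump_measure X \<omega>) \<partial>M)"
    by (rule nn_integral_cong, rule weighted) (simp_all add: sets_jump_measure)
  finally show ?thesis unfolding nu_mass_def .
qed

lemma compensator_mass_on_graph_measurable:
  assumes W: "W \<in> borel_measurable (P \<Otimes>\<^sub>M borel)"
    and graph: "\<And>\<omega> t x. \<omega> \<in> space M \<Longrightarrow> W ((\<omega>, t), x) \<noteq> 0 \<Longrightarrow> t \<le> c" and "0 \<le> c"
  shows "(\<lambda>\<omega>. \<integral>\<^sup>+ q. W ((\<omega>, fst q), snd q) \<partial>\<nu> \<omega>) \<in> borel_measurable M"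
proof -
  have "(\<lambda>\<omega>. (\<lambda>(\<omega>, t). \<integral>\<^sup>+ p. indicator {..t} (fst p) * W ((\<omega>, fst p), snd p) \<partial>\<nu> \<omega>) (\<omega>, c))
      \<in> borel_measurable M"
    using measurable_Pair_predictable[OF \<open>0 \<le> c\<close>] compensator_running_integral_predictable[OF W]
    by (rule measurable_compose)
  moreover have "(\<integral>\<^sup>+ p. indicator {..c} (fst p) * W ((\<omega>, fst p), snd p) \<partial>\<nu> \<omega>) =
      (\<integral>\<^sup>+ q. W ((\<omega>, fst q), snd q) \<partial>\<nu> \<omega>)" if "\<omega> \<in> space M" for \<omega>
    using graph[OF that] by (rule nn_integral_upto_eq)
  ultimately show ?thesis by (simp cong: measurable_cong)
qed

text \<open>\<open>E\<close> need not be predictable, so \<open>W\<close> cannot simply be restricted to \<open>E\<close>. Instead, by the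
  identity above the \<open>\<nu>\<close>-mass \<open>K\<close> of \<open>W\<close> satisfies \<open>E[K\<^sup>2] = E[K \<cdot> (W * \<mu>)] = 0\<close>, since \<open>K\<close>
  vanishes on \<open>E\<close> and \<open>W * \<mu>\<close> off \<open>E\<close>.\<close>
lemma null_set_if_compensator_vanishes_on_graph:
  assumes W: "W \<in> borel_measurable (P \<Otimes>\<^sub>M borel)"
    and sections: "\<And>\<omega>. \<omega> \<in> space M \<Longrightarrow> (\<lambda>q. W ((\<omega>, fst q), snd q)) \<in> borel_measurable borel"
    and graph: "\<And>\<omega> t x. \<omega> \<in> space M \<Longrightarrow> W ((\<omega>, t), x) \<noteq> 0 \<Longrightarrow> t = R \<omega> \<and> t \<le> c" and "0 \<le> c"
    and E: "E \<in> sets M"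
    and nu: "AE \<omega> in M. \<omega> \<in> E \<longrightarrow> (\<integral>\<^sup>+ q. W ((\<omega>, fst q), snd q) \<partial>\<nu> \<omega>) = 0"
    and mu_outside: "\<And>\<omega>. \<omega> \<in> space M - E \<Longrightarrow> (\<integral>\<^sup>+ q. W ((\<omega>, fst q), snd q) \<partial>jump_measure X \<omega>) = 0"
    and mu_inside: "\<And>\<omega>. \<omega> \<in> E \<Longrightarrow> 1 \<le> (\<integral>\<^sup>+ q. W ((\<omega>, fst q), snd q) \<partial>jump_measure X \<omega>)"
  shows "E \<in> null_sets M"
proof -
  let ?nu = "\<lambda>\<omega>. \<integral>\<^sup>+ q. W ((\<omega>, fst q), snd q) \<partial>\<nu> \<omega>"
    and ?mu = "\<lambda>\<omega>. \<integral>\<^sup>+ q. W ((\<omega>, fst q), snd q) \<partial>jump_measure X \<omega>"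
  have "AE \<omega> in M. ?nu \<omega> * ?mu \<omega> = 0"
  proof (rule AE_mp[OF nu AE_I2], rule impI)
    fix \<omega> assume "\<omega> \<in> space M" and "\<omega> \<in> E \<longrightarrow> ?nu \<omega> = 0"
    thus "?nu \<omega> * ?mu \<omega> = 0" using mu_outside[of \<omega>] by (cases "\<omega> \<in> E") simp_all
  qed
  hence "(\<integral>\<^sup>+\<omega>. ?nu \<omega> * ?mu \<omega> \<partial>M) = (\<integral>\<^sup>+\<omega>. 0 \<partial>M)" by (rule nn_integral_cong_AE)
  moreover have "(\<integral>\<^sup>+\<omega>. ?nu \<omega> * ?nu \<omega> \<partial>M) = (\<integral>\<^sup>+\<omega>. ?nu \<omega> * ?mu \<omega> \<partial>M)"
  proof (rule compensator_mass_on_graph_squared[OF W sections])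
    fix \<omega> t x assume "\<omega> \<in> space M" "W ((\<omega>, t), x) \<noteq> 0"
    thus "t = R \<omega>" using graph by blast
  qed
  moreover have "?nu \<in> borel_measurable M"
  proof (rule compensator_mass_on_graph_measurable[OF W _ \<open>0 \<le> c\<close>])
    fix \<omega> t x assume "\<omega> \<in> space M" "W ((\<omega>, t), x) \<noteq> 0"
    thus "t \<le> c" using graph by blast
  qed
  ultimately have "AE \<omega> in M. ?nu \<omega> * ?nu \<omega> = 0" by (simp add: nn_integral_0_iff_AE)
  hence "AE \<omega> in M. ?nu \<omega> = 0" by eventually_elim simp
  thus ?thesis by (rule null_set_if_compensator_vanishes[OF W _ E mu_inside])
qed
end

lemma continuous_on_nonneg_at_right:
  fixes g :: "real \<Rightarrow> real"
  assumes "continuous_on {0..} g" "0 \<le> t"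
  shows "continuous (at_right t) g"
proof -
  have "continuous (at t within {0..}) g"
    using assms by (simp add: continuous_on_eq_continuous_within)
  thus ?thesis by (rule continuous_within_subset) (use assms(2) in auto)
qed

lemma continuous_on_nonneg_tendsto_at_left:
  fixes g :: "real \<Rightarrow> real"
  assumes "continuous_on {0..} g" "0 < t"
  shows "(g \<longlongrightarrow> g t) (at_left t)"
proof -
  have "continuous (at t within {0..}) g"
    using assms by (simp add: continuous_on_eq_continuous_within)
  hence "continuous (at t within {0..t}) g" by (rule continuous_within_subset) auto
  thus ?thesis using at_within_Icc_at_left[OF assms(2)] by (simp add: continuous_within)
qed

lemma cadlag_diff_continuous:
  assumes f: "cadlag f" and g: "continuous_on {0..} g"
  shows "cadlag (\<lambda>t. f t - g t)"
  unfolding cadlag_def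
proof (intro conjI allI impI)
  fix t :: real assume "0 \<le> t"
  thus "continuous (at_right t) (\<lambda>t. f t - g t)"
    using f continuous_on_nonneg_at_right[OF g] by (intro continuous_diff) (simp_all add: cadlag_def)
next
  fix t :: real assume "0 < t"
  from tendsto_diff[OF cadlag_tendsto_left_lim[OF f this] continuous_on_nonneg_tendsto_at_left[OF g this]]
  show "\<exists>l. ((\<lambda>t. f t - g t) \<longlongrightarrow> l) (at_left t)" by blast
qed

lemma left_lim_diff_continuous:
  assumes f: "cadlag f" and g: "continuous_on {0..} g" and "0 < t"
  shows "left_lim (\<lambda>s. f s - g s) t = left_lim f t - g t"
  using tendsto_diff[OF cadlag_tendsto_left_lim[OF f \<open>0 < t\<close>] continuous_on_nonneg_tendsto_at_left[OF g \<open>0 < t\<close>]]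
    \<open>0 < t\<close> by (simp add: left_lim_def tendsto_Lim)

lemma AE_nn_integral_eq_0_if_below_ind_integral:
  assumes h: "AE \<omega> in M. \<forall>t\<ge>0. ind_integral \<nu> G t \<omega> = 0" and "0 \<le> c"
    and below: "\<And>\<omega> q. \<omega> \<in> space M \<Longrightarrow> Q \<omega> \<Longrightarrow> f \<omega> q \<le> indicator {..c} (fst q) * indicator (G \<omega>) q"
  shows "AE \<omega> in M. Q \<omega> \<longrightarrow> (\<integral>\<^sup>+ q. f \<omega> q \<partial>\<nu> \<omega>) = 0"
proof (rule AE_mp[OF h AE_I2], intro impI)
  fix \<omega> assume "\<omega> \<in> space M" "\<forall>t\<ge>0. ind_integral \<nu> G t \<omega> = 0" "Q \<omega>"
  moreover from this have "(\<integral>\<^sup>+ q. f \<omega> q \<partial>\<nu> \<omega>) \<le> ind_integral \<nu> G c \<omega>"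
    unfolding ind_integral_def by (intro nn_integral_mono below)
  ultimately show "(\<integral>\<^sup>+ q. f \<omega> q \<partial>\<nu> \<omega>) = 0" using \<open>0 \<le> c\<close> by simp
qed

locale barrier_crossing = compensated_jumps M F X \<nu>
  for M :: "'a measure" and F X \<nu> +
  fixes b :: "real \<Rightarrow> real"
  assumes X_adapted: "adapted M F X" and X_cadlag: "cadlag_process M X"
    and b_continuous: "continuous_on {0..} b"
    and starts_below: "\<forall>\<omega>\<in>space M. X 0 \<omega> < b 0"
begin

sublocale adapted_cadlag M F "Yp X b"
proof
  show "adapted M F (Yp X b)"
    using X_adapted unfolding adapted_def Yp_def by (intro allI impI borel_measurable_diff) auto
  show "cadlag_process M (Yp X b)"
    unfolding cadlag_process_def Yp_def
  proof
    fix \<omega> assume "\<omega> \<in> space M"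
    thus "cadlag (\<lambda>t. X t \<omega> - b t)"
      using X_cadlag by (intro cadlag_diff_continuous[OF _ b_continuous]) (simp add: cadlag_process_def)
  qed
qed

lemma sample_path_below_zero: "\<omega> \<in> space M \<Longrightarrow> cadlag_below_zero (sample_path \<omega>)"
  using sample_path_cadlag starts_below by unfold_locales (auto simp: Yp_def)

lemma left_lim_sample_path:
  "\<omega> \<in> space M \<Longrightarrow> 0 < t \<Longrightarrow> left_lim (sample_path \<omega>) t = left_lim (\<lambda>s. X s \<omega>) t - b t"
  using X_cadlag unfolding Yp_def cadlag_process_def by (intro left_lim_diff_continuous[OF _ b_continuous]) simp_all

lemma jump_eq_sample_path:
  "\<omega> \<in> space M \<Longrightarrow> 0 < t \<Longrightarrow> jump (\<lambda>s. X s \<omega>) t = Yp X b t \<omega> - left_lim (sample_path \<omega>) t"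
  using left_lim_sample_path by (simp add: jump_def Yp_def)

lemma hit_time_eq_hit: "hit_time X b \<omega> = hit (sample_path \<omega>)"
proof -
  have "{ereal t |t. 0 \<le> t \<and> 0 \<le> Yp X b t \<omega>} = ereal ` {t. 0 \<le> t \<and> 0 \<le> Yp X b t \<omega>}" by auto
  thus ?thesis by (simp add: hit_time_def hit_def first_time_def)
qed

lemma Y_tau_minus_eq: "Y_tau_minus X b \<omega> = left_lim (sample_path \<omega>) (real_of_ereal (hit (sample_path \<omega>)))"
  unfolding Y_tau_minus_def hit_time_eq_hit ..

lemma Y_tau_eq: "Y_tau X b \<omega> = Yp X b (real_of_ereal (hit (sample_path \<omega>))) \<omega>"
  unfolding Y_tau_def hit_time_eq_hit ..

definition approach_point :: "'a \<Rightarrow> real" where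
  "approach_point \<omega> = real_of_ereal (approach_limit (sample_path \<omega>))"

lemma approach_point_measurable [measurable]: "approach_point \<in> borel_measurable M"
  unfolding approach_point_def by measurable

lemma Y_approach_point_measurable [measurable]: "(\<lambda>\<omega>. Yp X b (approach_point \<omega>) \<omega>) \<in> borel_measurable M"
  using approach_limit_nonneg
  by (intro measurable_at_random_time approach_point_measurable) (simp add: approach_point_def real_of_ereal_pos)

lemma approach_limit_eq_point:
  "approach_limit (sample_path \<omega>) < \<infinity> \<Longrightarrow> approach_limit (sample_path \<omega>) = ereal (approach_point \<omega>)"
  using approach_limit_nonneg[of "sample_path \<omega>"]
  by (cases "approach_limit (sample_path \<omega>)") (auto simp: approach_point_def)

text \<open>A creeping path reaches the barrier continuously, so its jump there is its value.\<close>
lemma creeping_at_approach_point: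
  assumes \<omega>: "\<omega> \<in> space M" and creep: "creeping (sample_path \<omega>)"
  shows "0 < approach_point \<omega>" "left_lim (sample_path \<omega>) (approach_point \<omega>) = 0"
    "left_lim (\<lambda>s. X s \<omega>) (approach_point \<omega>) = b (approach_point \<omega>)"
    "jump (\<lambda>s. X s \<omega>) (approach_point \<omega>) = Yp X b (approach_point \<omega>) \<omega>"
proof -
  interpret cadlag_below_zero "sample_path \<omega>" by (rule sample_path_below_zero[OF \<omega>])
  have "approach_limit (sample_path \<omega>) = ereal (approach_point \<omega>)"
    using creep by (intro approach_limit_eq_point) (simp add: creeping_def)
  thus "0 < approach_point \<omega>" "left_lim (sample_path \<omega>) (approach_point \<omega>) = 0"
    using creeping_left_lim creep by (auto simp: creeping_def)
  thus "left_lim (\<lambda>s. X s \<omega>) (approach_point \<omega>) = b (approach_point \<omega>)"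
    "jump (\<lambda>s. X s \<omega>) (approach_point \<omega>) = Yp X b (approach_point \<omega>) \<omega>"
    using left_lim_sample_path[OF \<omega>] jump_eq_sample_path[OF \<omega>] by simp_all
qed

lemma indicator_creeping_graph_times:
  "\<omega> \<in> space M \<Longrightarrow> indicator (creeping_graph k \<times> B) ((\<omega>, t), x) =
    (indicator {q. creeping (sample_path \<omega>) \<and> approach_point \<omega> \<le> real k \<and> fst q = approach_point \<omega> \<and> snd q \<in> B} (t, x) :: ennreal)"
  using approach_limit_eq_point[of \<omega>]
  by (auto simp: mem_creeping_graph creeping_def approach_point_def split: split_indicator)

lemma creeping_graph_times_measurable:
  "B \<in> sets borel \<Longrightarrow> indicator (creeping_graph k \<times> B) \<in> borel_measurable (P \<Otimes>\<^sub>M borel)"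
  using creeping_graph_predictable by (intro borel_measurable_indicator pair_measureI) auto

lemma creeping_graph_times_sections_measurable:
  fixes B :: "real set"
  assumes B: "B \<in> sets borel" and \<omega>: "\<omega> \<in> space M"
  shows "(\<lambda>q. indicator (creeping_graph k \<times> B) ((\<omega>, fst q), snd q) :: ennreal) \<in> borel_measurable borel"
proof -
  let ?C = "creeping (sample_path \<omega>) \<and> approach_point \<omega> \<le> real k"
  have "(\<lambda>q. indicator (creeping_graph k \<times> B) ((\<omega>, fst q), snd q) :: ennreal) =
      indicator (if ?C then {approach_point \<omega>} \<times> B else {})"
    by (auto simp: fun_eq_iff indicator_creeping_graph_times[OF \<omega>] split: split_indicator)
  moreover have "{approach_point \<omega>} \<times> B \<in> sets (borel :: (real \<times> real) measure)"
    using B by (simp add: borel_prod[symmetric])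
  ultimately show ?thesis by simp
qed

lemma creeping_graph_jump_measure_ge_1:
  assumes \<omega>: "\<omega> \<in> space M" and creep: "creeping (sample_path \<omega>)" and k: "approach_point \<omega> \<le> real k"
    and B: "Yp X b (approach_point \<omega>) \<omega> \<in> B" "Yp X b (approach_point \<omega>) \<omega> \<noteq> 0"
  shows "1 \<le> (\<integral>\<^sup>+ q. indicator (creeping_graph k \<times> B) ((\<omega>, fst q), snd q) \<partial>jump_measure X \<omega>)"
  using creeping_at_approach_point[OF \<omega> creep] creep k B
  by (rule_tac nn_integral_jump_measure_ge_1[where s = "approach_point \<omega>"])
     (simp_all add: indicator_creeping_graph_times[OF \<omega>] split: split_indicator)

lemma creeping_below_barrier_before_hit:
  assumes \<omega>: "\<omega> \<in> space M" and creep: "creeping (sample_path \<omega>)"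
    and neg: "Yp X b (approach_point \<omega>) \<omega> < 0"
  shows "ereal (approach_point \<omega>) < hit (sample_path \<omega>)"
proof (rule ccontr)
  interpret cadlag_below_zero "sample_path \<omega>" by (rule sample_path_below_zero[OF \<omega>])
  have eq: "approach_limit (sample_path \<omega>) = ereal (approach_point \<omega>)"
    using creep by (intro approach_limit_eq_point) (simp add: creeping_def)
  assume "\<not> ereal (approach_point \<omega>) < hit (sample_path \<omega>)"
  hence "hit (sample_path \<omega>) = ereal (approach_point \<omega>)"
    using approach_limit_le_hit[of "sample_path \<omega>"] eq by simp
  moreover from this have "hit (sample_path \<omega>) < \<infinity>" by simp
  then obtain r where "hit (sample_path \<omega>) = ereal r" "0 \<le> Yp X b r \<omega>" by (rule hit_finite)
  ultimately show False using neg by simp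
qed

lemma premature_creeping_null:
  assumes h1: "AE \<omega> in M. \<forall>t\<ge>0. ind_integral \<nu> (Gamma_minus X b) t \<omega> = 0"
  shows "{\<omega>\<in>space M. creeping (sample_path \<omega>) \<and> approach_point \<omega> \<le> real k \<and>
    Yp X b (approach_point \<omega>) \<omega> < 0} \<in> null_sets M" (is "?E \<in> _")
proof (rule null_set_if_compensator_vanishes_on_graph[where R = approach_point and c = "real k"])
  let ?W = "indicator (creeping_graph k \<times> {..<0}) :: ('a \<times> real) \<times> real \<Rightarrow> ennreal"
  show "?W \<in> borel_measurable (P \<Otimes>\<^sub>M borel)" by (rule creeping_graph_times_measurable) simp
  show sections: "(\<lambda>q. ?W ((\<omega>, fst q), snd q)) \<in> borel_measurable borel" if "\<omega> \<in> space M" for \<omega>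
    using that by (intro creeping_graph_times_sections_measurable) simp_all
  show "?W ((\<omega>, t), x) \<noteq> 0 \<Longrightarrow> t = approach_point \<omega> \<and> t \<le> real k" if "\<omega> \<in> space M" for \<omega> t x
    using that by (simp add: indicator_creeping_graph_times split: split_indicator_asm)
  show "0 \<le> real k" by simp
  show "?E \<in> sets M" by measurable
  show "AE \<omega> in M. \<omega> \<in> ?E \<longrightarrow> (\<integral>\<^sup>+ q. ?W ((\<omega>, fst q), snd q) \<partial>\<nu> \<omega>) = 0"
  proof (rule AE_nn_integral_eq_0_if_below_ind_integral[OF h1])
    fix \<omega> q assume \<omega>: "\<omega> \<in> space M" and E: "\<omega> \<in> ?E"
    have "ereal (approach_point \<omega>) < hit_time X b \<omega>"
      using creeping_below_barrier_before_hit[OF \<omega>] E by (simp add: hit_time_eq_hit)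
    thus "?W ((\<omega>, fst q), snd q) \<le> indicator {..real k} (fst q) * indicator (Gamma_minus X b \<omega>) q"
      using creeping_at_approach_point(3)[OF \<omega>] E
      by (cases q) (auto simp: indicator_creeping_graph_times[OF \<omega>] Gamma_minus_def split: split_indicator)
  qed simp
  show "(\<integral>\<^sup>+ q. ?W ((\<omega>, fst q), snd q) \<partial>jump_measure X \<omega>) = 0" if "\<omega> \<in> space M - ?E" for \<omega>
  proof (rule nn_integral_jump_measure_eq_0)
    show "(\<lambda>q. ?W ((\<omega>, fst q), snd q)) \<in> borel_measurable borel" using that by (intro sections) simp
    fix s assume "0 < s" "jump (\<lambda>t. X t \<omega>) s \<noteq> 0"
    show "?W ((\<omega>, fst (s, jump (\<lambda>t. X t \<omega>) s)), snd (s, jump (\<lambda>t. X t \<omega>) s)) = 0"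
      using that creeping_at_approach_point(4)[of \<omega>]
      by (auto simp: indicator_creeping_graph_times split: split_indicator)
  qed
  show "1 \<le> (\<integral>\<^sup>+ q. ?W ((\<omega>, fst q), snd q) \<partial>jump_measure X \<omega>)" if "\<omega> \<in> ?E" for \<omega>
    using that by (intro creeping_graph_jump_measure_ge_1) auto
qed

definition premature_contact :: "'a set" where
  "premature_contact = {\<omega>\<in>space M. approach_limit (sample_path \<omega>) < hit (sample_path \<omega>)}"

lemma premature_contact_null:
  assumes h1: "AE \<omega> in M. \<forall>t\<ge>0. ind_integral \<nu> (Gamma_minus X b) t \<omega> = 0"
  shows "premature_contact \<in> null_sets M"
proof (rule complete2)
  show "(\<Union>k. {\<omega>\<in>space M. creeping (sample_path \<omega>) \<and> approach_point \<omega> \<le> real k \<and>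
      Yp X b (approach_point \<omega>) \<omega> < 0}) \<in> null_sets M"
    using premature_creeping_null[OF h1] by (intro null_sets_UN) auto
  show "premature_contact \<subseteq> (\<Union>k. {\<omega>\<in>space M. creeping (sample_path \<omega>) \<and> approach_point \<omega> \<le> real k \<and>
      Yp X b (approach_point \<omega>) \<omega> < 0})"
  proof
    fix \<omega> assume "\<omega> \<in> premature_contact"
    hence \<omega>: "\<omega> \<in> space M" and lt: "approach_limit (sample_path \<omega>) < hit (sample_path \<omega>)"
      by (auto simp: premature_contact_def)
    have "creeping (sample_path \<omega>) \<and> Yp X b (approach_point \<omega>) \<omega> < 0"
      using cadlag_below_zero.premature_left_contact[OF sample_path_below_zero[OF \<omega>] lt]
      by (simp add: approach_point_def)
    moreover obtain k :: nat where "approach_point \<omega> \<le> real k" using real_arch_simple by blast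
    ultimately show "\<omega> \<in> (\<Union>k. {\<omega>\<in>space M. creeping (sample_path \<omega>) \<and> approach_point \<omega> \<le> real k \<and>
      Yp X b (approach_point \<omega>) \<omega> < 0})" using \<omega> by blast
  qed
qed

lemma approach_limit_eq_hit: "\<omega> \<in> space M - premature_contact \<Longrightarrow> approach_limit (sample_path \<omega>) = hit (sample_path \<omega>)"
  using approach_limit_le_hit[of "sample_path \<omega>"] by (auto simp: premature_contact_def)

lemma creeping_overshoot_null:
  assumes h2: "AE \<omega> in M. \<forall>t\<ge>0. ind_integral \<nu> (Gamma_plus X b) t \<omega> = 0"
  shows "{\<omega>\<in>space M. creeping (sample_path \<omega>) \<and> approach_point \<omega> \<le> real k \<and>
    0 < Yp X b (approach_point \<omega>) \<omega>} \<in> null_sets M" (is "?E \<in> _")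
proof (rule null_set_if_compensator_vanishes)
  let ?W = "indicator (creeping_graph k \<times> {0<..}) :: ('a \<times> real) \<times> real \<Rightarrow> ennreal"
  show "?W \<in> borel_measurable (P \<Otimes>\<^sub>M borel)" by (rule creeping_graph_times_measurable) simp
  have "AE \<omega> in M. True \<longrightarrow> (\<integral>\<^sup>+ q. ?W ((\<omega>, fst q), snd q) \<partial>\<nu> \<omega>) = 0"
  proof (rule AE_nn_integral_eq_0_if_below_ind_integral[OF h2])
    fix \<omega> q assume \<omega>: "\<omega> \<in> space M"
    show "?W ((\<omega>, fst q), snd q) \<le> indicator {..real k} (fst q) * indicator (Gamma_plus X b \<omega>) q"
      using creeping_at_approach_point(3)[OF \<omega>]
      by (cases q) (auto simp: indicator_creeping_graph_times[OF \<omega>] Gamma_plus_def split: split_indicator)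
  qed simp
  thus "AE \<omega> in M. (\<integral>\<^sup>+ q. ?W ((\<omega>, fst q), snd q) \<partial>\<nu> \<omega>) = 0" by simp
  show "?E \<in> sets M" by measurable
  show "1 \<le> (\<integral>\<^sup>+ q. ?W ((\<omega>, fst q), snd q) \<partial>jump_measure X \<omega>)" if "\<omega> \<in> ?E" for \<omega>
    using that by (intro creeping_graph_jump_measure_ge_1) auto
qed

text \<open>A predictable version of \<open>\<Gamma>\<^sub>0\<close> up to time \<open>k\<close>: \<open>Y\<close> jumps from \<open>Y\<^sub>t\<^sub>- < 0\<close> exactly onto the
  barrier.\<close>
definition Gamma_zero_upto :: "nat \<Rightarrow> (('a \<times> real) \<times> real) set" where
  "Gamma_zero_upto k = {((\<omega>, t), x). \<omega> \<in> space M \<and> 0 < t \<and> t \<le> real k \<and>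
     left_lim (sample_path \<omega>) t < 0 \<and> x = - left_lim (sample_path \<omega>) t}"

lemma Gamma_zero_upto_measurable: "Gamma_zero_upto k \<in> sets (P \<Otimes>\<^sub>M borel)"
proof -
  define L where "L z = left_lim (sample_path (fst z)) (snd z)" for z
  have [measurable]: "L \<in> borel_measurable P" unfolding L_def by (rule left_lim_predictable)
  have "space M \<times> {0<..real k} \<in> sets P"
    using predictable_rectangle[OF space_in_F0, of "real k"] by (cases k) simp_all
  hence "(space M \<times> {0<..real k}) \<times> UNIV \<in> sets (P \<Otimes>\<^sub>M borel)" by (intro pair_measureI) auto
  moreover have "{z \<in> space (P \<Otimes>\<^sub>M borel). L (fst z) < 0 \<and> snd z = - L (fst z)} \<in> sets (P \<Otimes>\<^sub>M borel)"
    by measurable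
  ultimately have "((space M \<times> {0<..real k}) \<times> UNIV) \<inter>
      {z \<in> space (P \<Otimes>\<^sub>M borel). L (fst z) < 0 \<and> snd z = - L (fst z)} \<in> sets (P \<Otimes>\<^sub>M borel)"
    by (rule sets.Int)
  moreover have "Gamma_zero_upto k = ((space M \<times> {0<..real k}) \<times> UNIV) \<inter>
      {z \<in> space (P \<Otimes>\<^sub>M borel). L (fst z) < 0 \<and> snd z = - L (fst z)}"
    unfolding Gamma_zero_upto_def L_def by (auto simp: space_pair_measure space_P)
  ultimately show ?thesis by simp
qed

lemma jump_onto_barrier_null:
  assumes h3: "AE \<omega> in M. \<forall>t\<ge>0. ind_integral \<nu> (Gamma_zero X b) t \<omega> = 0"
  shows "{\<omega>\<in>space M. approach_limit (sample_path \<omega>) < \<infinity> \<and> approach_point \<omega> \<le> real k \<and>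
    (\<exists>n. approach_time (sample_path \<omega>) n = approach_limit (sample_path \<omega>)) \<and>
    Yp X b (approach_point \<omega>) \<omega> = 0} \<in> null_sets M" (is "?E \<in> _")
proof (rule null_set_if_compensator_vanishes)
  let ?W = "indicator (Gamma_zero_upto k) :: ('a \<times> real) \<times> real \<Rightarrow> ennreal"
  show "?W \<in> borel_measurable (P \<Otimes>\<^sub>M borel)" using Gamma_zero_upto_measurable by simp
  have "AE \<omega> in M. True \<longrightarrow> (\<integral>\<^sup>+ q. ?W ((\<omega>, fst q), snd q) \<partial>\<nu> \<omega>) = 0"
  proof (rule AE_nn_integral_eq_0_if_below_ind_integral[OF h3])
    fix \<omega> q assume \<omega>: "\<omega> \<in> space M"
    show "?W ((\<omega>, fst q), snd q) \<le> indicator {..real k} (fst q) * indicator (Gamma_zero X b \<omega>) q"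
      using left_lim_sample_path[OF \<omega>, of "fst q"]
      by (cases q) (auto simp: Gamma_zero_upto_def Gamma_zero_def split: split_indicator)
  qed simp
  thus "AE \<omega> in M. (\<integral>\<^sup>+ q. ?W ((\<omega>, fst q), snd q) \<partial>\<nu> \<omega>) = 0" by simp
  show "?E \<in> sets M" by measurable
  show "1 \<le> (\<integral>\<^sup>+ q. ?W ((\<omega>, fst q), snd q) \<partial>jump_measure X \<omega>)" if E: "\<omega> \<in> ?E" for \<omega>
  proof -
    have \<omega>: "\<omega> \<in> space M" using E by simp
    interpret cadlag_below_zero "sample_path \<omega>" by (rule sample_path_below_zero[OF \<omega>])
    obtain n where n: "approach_time (sample_path \<omega>) n = approach_limit (sample_path \<omega>)" using E by blast
    have "approach_limit (sample_path \<omega>) = ereal (approach_point \<omega>)"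
      using E by (intro approach_limit_eq_point) simp
    note attained = approach_time_attains_limit[OF this n]
    have jump: "jump (\<lambda>t. X t \<omega>) (approach_point \<omega>) = - left_lim (sample_path \<omega>) (approach_point \<omega>)"
      using jump_eq_sample_path[OF \<omega> attained(3)] E by simp
    show ?thesis
      using attained(2,3) E jump
      by (rule_tac nn_integral_jump_measure_ge_1[where s = "approach_point \<omega>"])
         (simp_all add: Gamma_zero_upto_def)
  qed
qed

lemma no_premature_left_contact:
  assumes h1: "AE \<omega> in M. \<forall>t\<ge>0. ind_integral \<nu> (Gamma_minus X b) t \<omega> = 0"
  shows "AE \<omega> in M. \<forall>t\<ge>0. ereal t < hit_time X b \<omega> \<longrightarrow> (SUP s\<in>{0..t}. Yp X b s \<omega>) < 0"
proof (rule AE_I'[OF premature_contact_null[OF h1]], rule subsetI, rule ccontr)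
  fix \<omega> assume "\<omega> \<in> {\<omega> \<in> space M. \<not> (\<forall>t\<ge>0. ereal t < hit_time X b \<omega> \<longrightarrow> (SUP s\<in>{0..t}. Yp X b s \<omega>) < 0)}"
    and "\<omega> \<notin> premature_contact"
  then obtain t where \<omega>: "\<omega> \<in> space M - premature_contact"
    and t: "0 \<le> t" "ereal t < hit_time X b \<omega>" "\<not> (SUP s\<in>{0..t}. Yp X b s \<omega>) < 0" by auto
  have "ereal t < approach_limit (sample_path \<omega>)"
    using t(2) approach_limit_eq_hit[OF \<omega>] by (simp add: hit_time_eq_hit)
  thus False using Sup_neg_before_approach_limit[OF t(1)] t(3) by simp
qed

lemma C_plus_null:
  assumes h1: "AE \<omega> in M. \<forall>t\<ge>0. ind_integral \<nu> (Gamma_minus X b) t \<omega> = 0"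
    and h2: "AE \<omega> in M. \<forall>t\<ge>0. ind_integral \<nu> (Gamma_plus X b) t \<omega> = 0"
  shows "C_plus M X b \<in> null_sets M"
proof (rule complete2)
  let ?O = "\<Union>k. {\<omega>\<in>space M. creeping (sample_path \<omega>) \<and> approach_point \<omega> \<le> real k \<and>
    0 < Yp X b (approach_point \<omega>) \<omega>}"
  show "premature_contact \<union> ?O \<in> null_sets M"
    using premature_contact_null[OF h1] creeping_overshoot_null[OF h2] by (intro null_sets.Un null_sets_UN) auto
  show "C_plus M X b \<subseteq> premature_contact \<union> ?O"
  proof
    fix \<omega> assume C: "\<omega> \<in> C_plus M X b"
    show "\<omega> \<in> premature_contact \<union> ?O"
    proof (cases "\<omega> \<in> premature_contact")
      case False
      have \<omega>: "\<omega> \<in> space M" using C by (simp add: C_plus_def)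
      interpret cadlag_below_zero "sample_path \<omega>" by (rule sample_path_below_zero[OF \<omega>])
      have eq: "approach_limit (sample_path \<omega>) = hit (sample_path \<omega>)"
        using False \<omega> by (intro approach_limit_eq_hit) simp
      have "hit (sample_path \<omega>) < \<infinity>" using C by (simp add: C_plus_def hit_time_eq_hit)
      then obtain r where r: "hit (sample_path \<omega>) = ereal r" by (rule hit_finite)
      have "creeping (sample_path \<omega>)"
        using creeping_iff_left_lim_hit[OF eq r] C r by (simp add: C_plus_def Y_tau_minus_eq)
      moreover have "approach_point \<omega> = r" using eq r by (simp add: approach_point_def)
      moreover obtain k :: nat where "r \<le> real k" using real_arch_simple by blast
      ultimately show ?thesis using C r \<omega> by (auto simp: C_plus_def Y_tau_eq)
    qed simp
  qed
qed

lemma J_zero_null: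
  assumes h1: "AE \<omega> in M. \<forall>t\<ge>0. ind_integral \<nu> (Gamma_minus X b) t \<omega> = 0"
    and h3: "AE \<omega> in M. \<forall>t\<ge>0. ind_integral \<nu> (Gamma_zero X b) t \<omega> = 0"
  shows "J_zero M X b \<in> null_sets M"
proof (rule complete2)
  let ?O = "\<Union>k. {\<omega>\<in>space M. approach_limit (sample_path \<omega>) < \<infinity> \<and> approach_point \<omega> \<le> real k \<and>
    (\<exists>n. approach_time (sample_path \<omega>) n = approach_limit (sample_path \<omega>)) \<and> Yp X b (approach_point \<omega>) \<omega> = 0}"
  show "premature_contact \<union> ?O \<in> null_sets M"
    using premature_contact_null[OF h1] jump_onto_barrier_null[OF h3] by (intro null_sets.Un null_sets_UN) auto
  show "J_zero M X b \<subseteq> premature_contact \<union> ?O"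
  proof
    fix \<omega> assume J: "\<omega> \<in> J_zero M X b"
    show "\<omega> \<in> premature_contact \<union> ?O"
    proof (cases "\<omega> \<in> premature_contact")
      case False
      have \<omega>: "\<omega> \<in> space M" using J by (simp add: J_zero_def)
      interpret cadlag_below_zero "sample_path \<omega>" by (rule sample_path_below_zero[OF \<omega>])
      have eq: "approach_limit (sample_path \<omega>) = hit (sample_path \<omega>)"
        using False \<omega> by (intro approach_limit_eq_hit) simp
      have "hit (sample_path \<omega>) < \<infinity>" using J by (simp add: J_zero_def hit_time_eq_hit)
      then obtain r where r: "hit (sample_path \<omega>) = ereal r" by (rule hit_finite)
      have "\<not> creeping (sample_path \<omega>)"
        using creeping_iff_left_lim_hit[OF eq r] J r by (simp add: J_zero_def Y_tau_minus_eq)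
      hence "\<exists>n. approach_time (sample_path \<omega>) n = approach_limit (sample_path \<omega>)"
        using eq r approach_time_le_limit[of "sample_path \<omega>"] by (auto simp: creeping_def order.order_iff_strict)
      moreover have "approach_point \<omega> = r" using eq r by (simp add: approach_point_def)
      moreover obtain k :: nat where "r \<le> real k" using real_arch_simple by blast
      ultimately show ?thesis using J eq r \<omega> by (auto simp: J_zero_def Y_tau_eq)
    qed simp
  qed
qed

lemma hit_finite_AE_iff:
  assumes h1: "AE \<omega> in M. \<forall>t\<ge>0. ind_integral \<nu> (Gamma_minus X b) t \<omega> = 0"
    and h2: "AE \<omega> in M. \<forall>t\<ge>0. ind_integral \<nu> (Gamma_plus X b) t \<omega> = 0"
    and h3: "AE \<omega> in M. \<forall>t\<ge>0. ind_integral \<nu> (Gamma_zero X b) t \<omega> = 0"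
  shows "AE \<omega> in M. hit_time X b \<omega> < \<infinity> \<longleftrightarrow> \<omega> \<in> C_zero M X b \<union> J_plus M X b"
proof (rule AE_I'[OF null_sets.Un[OF C_plus_null[OF h1 h2] J_zero_null[OF h1 h3]]], rule subsetI)
  fix \<omega> assume "\<omega> \<in> {\<omega> \<in> space M. \<not> (hit_time X b \<omega> < \<infinity> \<longleftrightarrow> \<omega> \<in> C_zero M X b \<union> J_plus M X b)}"
  hence \<omega>: "\<omega> \<in> space M" and fin: "hit (sample_path \<omega>) < \<infinity>"
    and not_CJ: "\<omega> \<notin> C_zero M X b \<union> J_plus M X b"
    by (auto simp: C_zero_def J_plus_def hit_time_eq_hit)
  interpret cadlag_below_zero "sample_path \<omega>" by (rule sample_path_below_zero[OF \<omega>])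
  obtain r where r: "hit (sample_path \<omega>) = ereal r" "0 < r" "0 \<le> Yp X b r \<omega>" using fin by (rule hit_finite)
  have "left_lim (sample_path \<omega>) r \<le> 0" by (rule left_lim_hit_nonpos[OF r(1,2)])
  thus "\<omega> \<in> C_plus M X b \<union> J_zero M X b"
    using \<omega> r not_CJ unfolding C_plus_def J_zero_def C_zero_def J_plus_def
    by (auto simp: hit_time_eq_hit Y_tau_minus_eq Y_tau_eq)
qed

lemma tau_L_eq_creeping_time:
  assumes "\<omega> \<in> space M - premature_contact"
  shows "tau_L M X b \<omega> = creeping_time \<omega>"
proof -
  have \<omega>: "\<omega> \<in> space M" using assms by simp
  have eq: "approach_limit (sample_path \<omega>) = hit (sample_path \<omega>)" by (rule approach_limit_eq_hit[OF assms])
  show ?thesis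
  proof (cases "hit (sample_path \<omega>)")
    case (real r)
    have "\<omega> \<in> L_set M X b \<longleftrightarrow> creeping (sample_path \<omega>)"
      using cadlag_below_zero.creeping_iff_left_lim_hit[OF sample_path_below_zero[OF \<omega>] eq real] \<omega> real
      by (simp add: L_set_def hit_time_eq_hit Y_tau_minus_eq)
    thus ?thesis using eq by (simp add: tau_L_def creeping_time_def hit_time_eq_hit)
  next
    case PInf
    thus ?thesis using eq by (simp add: tau_L_def creeping_time_def L_set_def hit_time_eq_hit creeping_def)
  next
    case MInf
    thus ?thesis using hit_nonneg[of "sample_path \<omega>"] by simp
  qed
qed

lemma tau_L_predictable:
  assumes h1: "AE \<omega> in M. \<forall>t\<ge>0. ind_integral \<nu> (Gamma_minus X b) t \<omega> = 0"
  shows "predictable_time M F (tau_L M X b)"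
proof (rule predictable_time_null_modification[OF _ premature_contact_null[OF h1] tau_L_eq_creeping_time])
  show "predictable_time M F creeping_time"
    using creeping_time_stopping_time stoch_from_creeping_time_predictable by (simp add: predictable_time_iff)
  show "0 \<le> tau_L M X b \<omega>" for \<omega>
    using hit_nonneg[of "sample_path \<omega>"] by (simp add: tau_L_def hit_time_eq_hit)
qed

lemma J_plus_at_predictable_time_null:
  assumes no_jump: "{\<omega>\<in>space M. \<sigma> \<omega> < \<infinity> \<and> jump (\<lambda>t. X t \<omega>) (real_of_ereal (\<sigma> \<omega>)) \<noteq> 0} \<in> null_sets M"
  shows "{\<omega>\<in>J_plus M X b. hit_time X b \<omega> = \<sigma> \<omega>} \<in> null_sets M"
proof (rule complete2[OF _ no_jump], rule subsetI)
  fix \<omega> assume "\<omega> \<in> {\<omega>\<in>J_plus M X b. hit_time X b \<omega> = \<sigma> \<omega>}"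
  hence \<omega>: "\<omega> \<in> space M" and J: "\<omega> \<in> J_plus M X b" and \<sigma>: "hit (sample_path \<omega>) = \<sigma> \<omega>"
    by (auto simp: J_plus_def hit_time_eq_hit)
  interpret cadlag_below_zero "sample_path \<omega>" by (rule sample_path_below_zero[OF \<omega>])
  have "hit (sample_path \<omega>) < \<infinity>" using J by (simp add: J_plus_def hit_time_eq_hit)
  then obtain r where r: "hit (sample_path \<omega>) = ereal r" "0 < r" by (rule hit_finite)
  have "left_lim (sample_path \<omega>) r < 0" "0 < Yp X b r \<omega>"
    using J r by (simp_all add: J_plus_def Y_tau_minus_eq Y_tau_eq)
  hence "jump (\<lambda>t. X t \<omega>) r \<noteq> 0" using jump_eq_sample_path[OF \<omega> r(2)] by simp
  moreover have "\<sigma> \<omega> = ereal r" using \<sigma> r(1) by simp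
  ultimately show "\<omega> \<in> {\<omega>\<in>space M. \<sigma> \<omega> < \<infinity> \<and> jump (\<lambda>t. X t \<omega>) (real_of_ereal (\<sigma> \<omega>)) \<noteq> 0}"
    using \<omega> by simp
qed

end

theorem corollary3p10:
  fixes M :: "'a measure" and F :: "real \<Rightarrow> 'a measure"
    and X :: "real \<Rightarrow> 'a \<Rightarrow> real" and b :: "real \<Rightarrow> real"
    and \<nu> :: "'a \<Rightarrow> (real \<times> real) measure"
  assumes filt: "usual_filtration M F"
    and semi: "semimartingale M F X"
    and b_cont: "continuous_on {0..} b"
    and start: "\<forall>\<omega>\<in>space M. X 0 \<omega> < b 0"
    and comp: "compensator M F X \<nu>"
    and h1: "AE \<omega> in M. \<forall>t\<ge>0. ind_integral \<nu> (Gamma_minus X b) t \<omega> = 0"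
    and h2: "AE \<omega> in M. \<forall>t\<ge>0. ind_integral \<nu> (Gamma_plus X b) t \<omega> = 0"
    and h3: "AE \<omega> in M. \<forall>t\<ge>0. ind_integral \<nu> (Gamma_zero X b) t \<omega> = 0"
  shows "(AE \<omega> in M. \<forall>t\<ge>0. ereal t < hit_time X b \<omega> \<longrightarrow> (SUP s\<in>{0..t}. Yp X b s \<omega>) < 0)
    \<and> C_plus M X b \<in> null_sets M
    \<and> J_zero M X b \<in> null_sets M
    \<and> C_zero M X b \<inter> J_plus M X b = {}
    \<and> (AE \<omega> in M. hit_time X b \<omega> < \<infinity> \<longleftrightarrow> \<omega> \<in> C_zero M X b \<union> J_plus M X b)
    \<and> ((\<forall>\<sigma>. predictable_time M F \<sigma> \<longrightarrow>
          {\<omega>\<in>space M. \<sigma> \<omega> < \<infinity> \<and> jump (\<lambda>t. X t \<omega>) (real_of_ereal (\<sigma> \<omega>)) \<noteq> 0} \<in> null_sets M)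
        \<longrightarrow> predictable_time M F (tau_L M X b) \<and>
            (\<forall>\<sigma>. predictable_time M F \<sigma> \<longrightarrow>
               {\<omega>\<in>J_plus M X b. hit_time X b \<omega> = \<sigma> \<omega>} \<in> null_sets M))"
proof -
  interpret barrier_crossing M F X \<nu> b
    using filt semi b_cont start comp by unfold_locales (simp_all add: semimartingale_def)
  have "C_zero M X b \<inter> J_plus M X b = {}" by (auto simp: C_zero_def J_plus_def)
  thus ?thesis
    using no_premature_left_contact[OF h1] C_plus_null[OF h1 h2] J_zero_null[OF h1 h3]
      hit_finite_AE_iff[OF h1 h2 h3] tau_L_predictable[OF h1] J_plus_at_predictable_time_null
    by blast
qed

end
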